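(* Let $n,N\ge1$, $T>0$, $\mathbf c\in\mathbb R^n_+$, $\mathbf d\in\mathbb R^n_+$, $C\ge0$ with $d_{i+1}-d_i\le c_{i+1}$ for $i\in[n-1]$, let $\mathcal U=\{\mathbf u:\mathbf u^L\le\mathbf u\le\mathbf u^U\}$ with $0\le u^L_i<u^U_i<\infty$, and let $\widehat{\mathbf u}^1,\dots,\widehat{\mathbf u}^N\in\mathcal U$. For fixed $\bar{\mathbf s}\in\mathcal S$ and $\epsilon\ge0$, $\sup_{\mathbb Q\in\mathcal D_1(\widehat{\mathbb P}^N,\epsilon)}\mathbb E_{\mathbb Q}[f(\bar{\mathbf s},\mathbf u)]$ equals the optimal value of the linear program $$\max_{\mathbf p,\mathbf q,\mathbf r}\ \frac1N\sum_{j=1}^N\sum_{i=1}^n\sum_{\ell=i}^{n+1}\pi_{i\ell}\Big[(u^L_i-\widehat u^j_i)q_{i\ell j}+(u^U_i-\widehat u^j_i)r_{i\ell j}+\Big(\sum_{k=1}^ip_{k\ell j}\Big)(\widehat u^j_i-\bar s_i)\Big]$$ subject to $\frac1N\sum_{j=1}^N\sum_{i=1}^n\sum_{\ell=i}^{n+1}\big[(\widehat u^j_i-u^L_i)q_{i\ell j}+(u^U_i-\widehat u^j_i)r_{i\ell j}\big]\le\epsilon$; $\sum_{\ell=i}^{n+1}\sum_{k=1}^ip_{k\ell j}=1$ for all $i\in[n],j\in[N]$; $\sum_{k=1}^ip_{k\ell j}-q_{i\ell j}-r_{i\ell j}\ge0$ for all $i\in[n],\ell\in[i,n+1]_{\mathbb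 Z},j\in[N]$; and $p_{i\ell j},q_{i\ell j},r_{i\ell j}\ge0$ for all $i\in[n],\ell\in[i,n+1]_{\mathbb Z},j\in[N]$. Let $\{p^\star_{k\ell j},q^\star_{i\ell j},r^\star_{i\ell j}\}$ be an optimal solution and let $\mathcal T=\{\mathbf t\in\{0,1\}^{(n+1)(n+2)/2}:\sum_{k=1}^i\sum_{\ell=i}^{n+1}t_{k\ell}=1\ \forall i\in[n+1]\}$, where $\mathbf t$ is indexed by pairs $(k,\ell)$ with $1\le k\le\ell\le n+1$. Then for each $j\in[N]$ there exists a probability distribution $\mathbb P^j_{\mathbf t}$ on $\mathcal T$ with $\mathbb P^j_{\mathbf t}\{t_{k\ell}=1\}=p^\star_{k\ell j}$ for all $k\in[n]$, $\ell\in[k,n+1]_{\mathbb Z}$. Moreover, defining, with the convention $0/0=0$, $$u_{i\ell j}=\widehat u^j_i+\frac{q^\star_{i\ell j}(u^L_i-\widehat u^j_i)}{\sum_{k=1}^ip^\star_{k\ell j}}+\frac{r^\star_{i\ell j}(u^U_i-\widehat u^j_i)}{\sum_{k=1}^ip^\star_{k\ell j}},\qquad u^j_i(\boldsymbol\tau)=\sum_{\ell=i}^{n+1}\Big(\sum_{k=1}^i\tau_{k\ell}\Big)u_{i\ell j}$$ for $i\in[n]$, $j\in[N]$, $\boldsymbol\tau\in\mathcal T$, and $\mathbb Q^\star=\frac1N\sum_{j=1}^N\sum_{\boldsymbol\tau\in\mathcal T}\mathbb P^j_{\mathbf t}\{\mathbf t=\boldsymbol\tau\}\delta_{\mathbf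 u^j(\boldsymbol\tau)}$, we have $\mathbb Q^\star\in\mathcal D_1(\widehat{\mathbb P}^N,\epsilon)$ and $\mathbb E_{\mathbb Q^\star}[f(\bar{\mathbf s},\mathbf u)]=\sup_{\mathbb Q\in\mathcal D_1(\widehat{\mathbb P}^N,\epsilon)}\mathbb E_{\mathbb Q}[f(\bar{\mathbf s},\mathbf u)]$.
   Context: Notation: $[m]=\{1,\dots,m\}$, $[i,j]_{\mathbb Z}=\{i,\dots,j\}$; $\delta_{\mathbf x}$ is the Dirac measure at $\mathbf x$. $\mathcal S=\{\mathbf s\in\mathbb R^n:\mathbf s\ge0,\sum_is_i\le T\}$. $f(\mathbf s,\mathbf u)$ is the optimal value of $\min_{\mathbf w\in\mathbb R^{n+1},\mathbf v\in\mathbb R^n}\sum_{i=1}^n(c_iw_i+d_iv_i)+Cw_{n+1}$ s.t. $w_i-v_{i-1}=u_{i-1}+w_{i-1}-s_{i-1}$ ($i\in[2,n+1]_{\mathbb Z}$), $\mathbf w\ge0,w_1=0,\mathbf v\ge0$. $d_1(\mathbb Q_1,\mathbb Q_2)=\inf_\Pi\mathbb E_\Pi\|\mathbf u_1-\mathbf u_2\|_1$ over couplings $\Pi$; $\widehat{\mathbb P}^N=\frac1N\sum_j\delta_{\widehat{\mathbf u}^j}$; $\mathcal D_1(\widehat{\mathbb P}^N,\epsilon)$ is the set of probability distributions $\mathbb Q$ on $\mathcal U$ with $d_1(\mathbb Q,\widehat{\mathbb P}^N)\le\epsilon$. Constants: for $i\in[n]$, $\pi_{i\ell}=-d_\ell+\sum_{q=i+1}^\ell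 c_q$ for $\ell\in[i,n]_{\mathbb Z}$ and $\pi_{i,n+1}=C+\sum_{q=i+1}^nc_q$. *)

theory Defs
  imports "HOL-Probability.Probability"
begin

text \<open>Vectors in R^n are extensional functions on {1..n} (elements of the product
  measurable space). Index conventions follow the paper (1-based).\<close>

definition Mn :: "nat \<Rightarrow> (nat \<Rightarrow> real) measure" where
  "Mn n = PiM {1..n} (\<lambda>_. borel)"

definition Uset :: "nat \<Rightarrow> (nat \<Rightarrow> real) \<Rightarrow> (nat \<Rightarrow> real) \<Rightarrow> (nat \<Rightarrow> real) set" where
  "Uset n uL uU = PiE {1..n} (\<lambda>i. {uL i..uU i})"

definition fval :: "nat \<Rightarrow> (nat \<Rightarrow> real) \<Rightarrow> (nat \<Rightarrow> real) \<Rightarrow> real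
    \<Rightarrow> (nat \<Rightarrow> real) \<Rightarrow> (nat \<Rightarrow> real) \<Rightarrow> real" where
  "fval n c d C s u = Inf {(\<Sum>i=1..n. c i * w i + d i * v i) + C * w (n+1) | w v.
      (\<forall>i\<in>{2..n+1}. w i - v (i-1) = u (i-1) + w (i-1) - s (i-1)) \<and>
      (\<forall>i\<in>{1..n+1}. w i \<ge> 0) \<and> w 1 = 0 \<and> (\<forall>i\<in>{1..n}. v i \<ge> 0)}"

definition coupling :: "nat \<Rightarrow> (nat \<Rightarrow> real) measure \<Rightarrow> (nat \<Rightarrow> real) measure
    \<Rightarrow> ((nat \<Rightarrow> real) \<times> (nat \<Rightarrow> real)) measure \<Rightarrow> bool" where
  "coupling n Q1 Q2 W \<longleftrightarrow> prob_space W \<and> sets W = sets (Mn n \<Otimes>\<^sub>M Mn n) \<and>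
      distr W (Mn n) fst = Q1 \<and> distr W (Mn n) snd = Q2"

definition wass1 :: "nat \<Rightarrow> (nat \<Rightarrow> real) measure \<Rightarrow> (nat \<Rightarrow> real) measure \<Rightarrow> ennreal" where
  "wass1 n Q1 Q2 = (INF W\<in>{W. coupling n Q1 Q2 W}.
      \<integral>\<^sup>+ x. ennreal (\<Sum>i=1..n. \<bar>fst x i - snd x i\<bar>) \<partial>W)"

text \<open>Empirical distribution (1/N) sum_j delta_{uhat^j}; uh j i is component i of sample j.\<close>
definition empirical :: "nat \<Rightarrow> nat \<Rightarrow> (nat \<Rightarrow> nat \<Rightarrow> real) \<Rightarrow> (nat \<Rightarrow> real) measure" where
  "empirical n N uh =
     distr (measure_pmf (map_pmf (\<lambda>j. restrict (uh j) {1..n}) (pmf_of_set {1..N}))) (Mn n) (\<lambda>x. x)"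

definition Dball :: "nat \<Rightarrow> (nat \<Rightarrow> real) \<Rightarrow> (nat \<Rightarrow> real) \<Rightarrow> nat \<Rightarrow> (nat \<Rightarrow> nat \<Rightarrow> real)
    \<Rightarrow> real \<Rightarrow> (nat \<Rightarrow> real) measure set" where
  "Dball n uL uU N uh eps = {Q. prob_space Q \<and> sets Q = sets (Mn n) \<and>
      emeasure Q (Uset n uL uU) = 1 \<and> wass1 n Q (empirical n N uh) \<le> ennreal eps}"

definition pic :: "nat \<Rightarrow> (nat \<Rightarrow> real) \<Rightarrow> (nat \<Rightarrow> real) \<Rightarrow> real \<Rightarrow> nat \<Rightarrow> nat \<Rightarrow> real" where
  "pic n c d C i l = (if l \<le> n then - d l + (\<Sum>q=i+1..l. c q) else C + (\<Sum>q=i+1..n. c q))"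

definition Psum :: "(nat \<Rightarrow> nat \<Rightarrow> nat \<Rightarrow> real) \<Rightarrow> nat \<Rightarrow> nat \<Rightarrow> nat \<Rightarrow> real" where
  "Psum p i l j = (\<Sum>k=1..i. p k l j)"

definition LP_feasible :: "nat \<Rightarrow> nat \<Rightarrow> (nat \<Rightarrow> real) \<Rightarrow> (nat \<Rightarrow> real) \<Rightarrow> (nat \<Rightarrow> nat \<Rightarrow> real)
    \<Rightarrow> real \<Rightarrow> (nat \<Rightarrow> nat \<Rightarrow> nat \<Rightarrow> real) \<Rightarrow> (nat \<Rightarrow> nat \<Rightarrow> nat \<Rightarrow> real)
    \<Rightarrow> (nat \<Rightarrow> nat \<Rightarrow> nat \<Rightarrow> real) \<Rightarrow> bool" where
  "LP_feasible n N uL uU uh eps p q r \<longleftrightarrow>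
     (1 / real N) * (\<Sum>j=1..N. \<Sum>i=1..n. \<Sum>l=i..n+1.
        (uh j i - uL i) * q i l j + (uU i - uh j i) * r i l j) \<le> eps \<and>
     (\<forall>i\<in>{1..n}. \<forall>j\<in>{1..N}. (\<Sum>l=i..n+1. Psum p i l j) = 1) \<and>
     (\<forall>i\<in>{1..n}. \<forall>l\<in>{i..n+1}. \<forall>j\<in>{1..N}. Psum p i l j - q i l j - r i l j \<ge> 0) \<and>
     (\<forall>i\<in>{1..n}. \<forall>l\<in>{i..n+1}. \<forall>j\<in>{1..N}. p i l j \<ge> 0 \<and> q i l j \<ge> 0 \<and> r i l j \<ge> 0)"

definition LP_obj :: "nat \<Rightarrow> nat \<Rightarrow> (nat \<Rightarrow> real) \<Rightarrow> (nat \<Rightarrow> real) \<Rightarrow> real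
    \<Rightarrow> (nat \<Rightarrow> real) \<Rightarrow> (nat \<Rightarrow> real) \<Rightarrow> (nat \<Rightarrow> nat \<Rightarrow> real) \<Rightarrow> (nat \<Rightarrow> real)
    \<Rightarrow> (nat \<Rightarrow> nat \<Rightarrow> nat \<Rightarrow> real) \<Rightarrow> (nat \<Rightarrow> nat \<Rightarrow> nat \<Rightarrow> real)
    \<Rightarrow> (nat \<Rightarrow> nat \<Rightarrow> nat \<Rightarrow> real) \<Rightarrow> real" where
  "LP_obj n N c d C uL uU uh s p q r =
     (1 / real N) * (\<Sum>j=1..N. \<Sum>i=1..n. \<Sum>l=i..n+1. pic n c d C i l *
        ((uL i - uh j i) * q i l j + (uU i - uh j i) * r i l j + Psum p i l j * (uh j i - s i)))"

definition LP_val :: "nat \<Rightarrow> nat \<Rightarrow> (nat \<Rightarrow> real) \<Rightarrow> (nat \<Rightarrow> real) \<Rightarrow> real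
    \<Rightarrow> (nat \<Rightarrow> real) \<Rightarrow> (nat \<Rightarrow> real) \<Rightarrow> (nat \<Rightarrow> nat \<Rightarrow> real) \<Rightarrow> (nat \<Rightarrow> real) \<Rightarrow> real \<Rightarrow> real" where
  "LP_val n N c d C uL uU uh s eps = Sup {LP_obj n N c d C uL uU uh s p q r | p q r.
      LP_feasible n N uL uU uh eps p q r}"

definition Pairs :: "nat \<Rightarrow> (nat \<times> nat) set" where
  "Pairs n = {(k, l). 1 \<le> k \<and> k \<le> l \<and> l \<le> n + 1}"

definition Tset :: "nat \<Rightarrow> (nat \<times> nat \<Rightarrow> nat) set" where
  "Tset n = {t \<in> PiE (Pairs n) (\<lambda>_. {0, 1}).
      \<forall>i\<in>{1..n+1}. (\<Sum>k=1..i. \<Sum>l=i..n+1. t (k, l)) = 1}"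

definition has_marginals :: "nat \<Rightarrow> (nat \<Rightarrow> nat \<Rightarrow> nat \<Rightarrow> real) \<Rightarrow> nat \<Rightarrow> (nat \<times> nat \<Rightarrow> nat) pmf \<Rightarrow> bool" where
  "has_marginals n p j Pt \<longleftrightarrow> set_pmf Pt \<subseteq> Tset n \<and>
     (\<forall>k\<in>{1..n}. \<forall>l\<in>{k..n+1}. measure_pmf.prob Pt {t. t (k, l) = 1} = p k l j)"

text \<open>u_{ilj} (division by zero yields 0 in Isabelle, matching the convention 0/0 = 0).\<close>
definition ustar :: "(nat \<Rightarrow> real) \<Rightarrow> (nat \<Rightarrow> real) \<Rightarrow> (nat \<Rightarrow> nat \<Rightarrow> real)
    \<Rightarrow> (nat \<Rightarrow> nat \<Rightarrow> nat \<Rightarrow> real) \<Rightarrow> (nat \<Rightarrow> nat \<Rightarrow> nat \<Rightarrow> real)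
    \<Rightarrow> (nat \<Rightarrow> nat \<Rightarrow> nat \<Rightarrow> real) \<Rightarrow> nat \<Rightarrow> nat \<Rightarrow> nat \<Rightarrow> real" where
  "ustar uL uU uh p q r i l j = uh j i + q i l j * (uL i - uh j i) / Psum p i l j
      + r i l j * (uU i - uh j i) / Psum p i l j"

definition uvec :: "nat \<Rightarrow> (nat \<Rightarrow> real) \<Rightarrow> (nat \<Rightarrow> real) \<Rightarrow> (nat \<Rightarrow> nat \<Rightarrow> real)
    \<Rightarrow> (nat \<Rightarrow> nat \<Rightarrow> nat \<Rightarrow> real) \<Rightarrow> (nat \<Rightarrow> nat \<Rightarrow> nat \<Rightarrow> real)
    \<Rightarrow> (nat \<Rightarrow> nat \<Rightarrow> nat \<Rightarrow> real) \<Rightarrow> nat \<Rightarrow> (nat \<times> nat \<Rightarrow> nat) \<Rightarrow> (nat \<Rightarrow> real)" where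
  "uvec n uL uU uh p q r j \<tau> = (\<lambda>i\<in>{1..n}. \<Sum>l=i..n+1.
      (\<Sum>k=1..i. real (\<tau> (k, l))) * ustar uL uU uh p q r i l j)"

definition Qstar :: "nat \<Rightarrow> nat \<Rightarrow> (nat \<Rightarrow> real) \<Rightarrow> (nat \<Rightarrow> real) \<Rightarrow> (nat \<Rightarrow> nat \<Rightarrow> real)
    \<Rightarrow> (nat \<Rightarrow> nat \<Rightarrow> nat \<Rightarrow> real) \<Rightarrow> (nat \<Rightarrow> nat \<Rightarrow> nat \<Rightarrow> real)
    \<Rightarrow> (nat \<Rightarrow> nat \<Rightarrow> nat \<Rightarrow> real) \<Rightarrow> (nat \<Rightarrow> (nat \<times> nat \<Rightarrow> nat) pmf) \<Rightarrow> (nat \<Rightarrow> real) measure" where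
  "Qstar n N uL uU uh p q r Pt = distr (measure_pmf
      (bind_pmf (pmf_of_set {1..N}) (\<lambda>j. map_pmf (uvec n uL uU uh p q r j) (Pt j)))) (Mn n) (\<lambda>x. x)"

end

theory Submission
  imports Defs
begin

text \<open>The second-stage LP is solved greedily: the excess carried from stage \<open>i\<close> is cleared at a
  stage \<open>\<lambda> i\<close>, and \<open>\<pi>(i, \<lambda> i)\<close> is an optimal dual solution, so that
  \<open>f(s, u) = \<Sum>i. \<pi>(i, \<lambda> i) (u i - s i)\<close>, while any other admissible assignment of interval ends
  gives a lower bound by weak duality. A feasible LP point is realised by a random partition of
  \<open>{1..n+1}\<close> into intervals with the marginals \<open>p\<close>; moving sample \<open>j\<close> to \<open>u\<^sup>j(\<tau>)\<close> yields a
  distribution within the ball whose expected cost dominates the LP objective. Conversely,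
  conditioning a nearly optimal coupling of any \<open>Q\<close> in the ball with the empirical distribution on
  the sample and on the clearing intervals produces an LP point whose objective is \<open>E\<^sub>Q f\<close> up to an
  arbitrarily small error.\<close>

section \<open>The second-stage value\<close>

primrec net_excess :: "(nat \<Rightarrow> real) \<Rightarrow> (nat \<Rightarrow> real) \<Rightarrow> nat \<Rightarrow> real" where
  "net_excess s u 0 = 0"
| "net_excess s u (Suc i) = max 0 (net_excess s u i) + u (Suc i) - s (Suc i)"

definition clearing_stage :: "nat \<Rightarrow> (nat \<Rightarrow> real) \<Rightarrow> (nat \<Rightarrow> real) \<Rightarrow> nat \<Rightarrow> nat" where
  "clearing_stage n s u i = (LEAST l. i \<le> l \<and> (n + 1 \<le> l \<or> net_excess s u (min l n) \<le> 0))"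

lemma clearing_stage_bounds:
  assumes "i \<le> n + 1"
  shows "i \<le> clearing_stage n s u i" "clearing_stage n s u i \<le> n + 1"
proof -
  let ?P = "\<lambda>l. i \<le> l \<and> (n + 1 \<le> l \<or> net_excess s u (min l n) \<le> 0)"
  have "?P (n + 1)" using assms by simp
  then have "?P (Least ?P)" "Least ?P \<le> n + 1" by (rule LeastI, rule Least_le)
  then show "i \<le> clearing_stage n s u i" "clearing_stage n s u i \<le> n + 1"
    unfolding clearing_stage_def by simp_all
qed

lemma clearing_stage_self:
  assumes "i \<le> n" "net_excess s u i \<le> 0"
  shows "clearing_stage n s u i = i"
  unfolding clearing_stage_def using assms by (intro Least_equality) auto

lemma clearing_stage_Suc:
  assumes "i \<le> n" "net_excess s u i > 0"
  shows "clearing_stage n s u i = clearing_stage n s u (Suc i)"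
proof -
  have "(\<lambda>l. i \<le> l \<and> (n + 1 \<le> l \<or> net_excess s u (min l n) \<le> 0)) =
        (\<lambda>l. Suc i \<le> l \<and> (n + 1 \<le> l \<or> net_excess s u (min l n) \<le> 0))"
  proof
    fix l show "(i \<le> l \<and> (n + 1 \<le> l \<or> net_excess s u (min l n) \<le> 0)) =
        (Suc i \<le> l \<and> (n + 1 \<le> l \<or> net_excess s u (min l n) \<le> 0))"
      using assms by (cases "l = i") auto
  qed
  then show ?thesis unfolding clearing_stage_def by simp
qed

lemma clearing_stage_0: "clearing_stage n s u 0 = 0"
  unfolding clearing_stage_def by (intro Least_equality) auto

lemma clearing_stage_Suc_if_passed:
  assumes "i \<le> n" "Suc i \<le> l" "clearing_stage n s u i = l"
  shows "clearing_stage n s u (Suc i) = l"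
  using assms clearing_stage_self[of i n s u] clearing_stage_Suc[of i n s u]
  by (cases "net_excess s u i \<le> 0") auto

text \<open>Both the clearing stages of a demand path and the interval ends encoded by an element
  of \<^const>\<open>Tset\<close> are of this form, which is all that dual feasibility needs.\<close>
definition admissible_ends :: "nat \<Rightarrow> (nat \<Rightarrow> nat) \<Rightarrow> bool" where
  "admissible_ends n \<sigma> \<longleftrightarrow> (\<forall>i\<in>{1..n}. i \<le> \<sigma> i \<and> \<sigma> i \<le> n + 1) \<and>
     (\<forall>i\<in>{1..n-1}. \<sigma> i = i \<or> \<sigma> i = \<sigma> (Suc i))"

lemma admissible_ends_clearing_stage: "admissible_ends n (clearing_stage n s u)"
proof -
  have "clearing_stage n s u i = i \<or> clearing_stage n s u i = clearing_stage n s u (Suc i)"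
    if "i \<in> {1..n-1}" for i
    using that clearing_stage_self[of i n s u] clearing_stage_Suc[of i n s u] by force
  moreover have "\<forall>i\<in>{1..n}. i \<le> clearing_stage n s u i \<and> clearing_stage n s u i \<le> n + 1"
    using clearing_stage_bounds by auto
  ultimately show ?thesis unfolding admissible_ends_def by blast
qed

definition dual_feasible :: "nat \<Rightarrow> (nat \<Rightarrow> real) \<Rightarrow> (nat \<Rightarrow> real) \<Rightarrow> real \<Rightarrow> (nat \<Rightarrow> real) \<Rightarrow> bool" where
  "dual_feasible n c d C y \<longleftrightarrow> (\<forall>i\<in>{1..n}. - d i \<le> y i) \<and>
     (\<forall>i\<in>{1..n-1}. y i \<le> c (Suc i) + y (Suc i)) \<and> y n \<le> C"

lemma pic_Suc:
  assumes "i \<in> {1..n-1}" "i + 1 \<le> l" "l \<le> n + 1"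
  shows "pic n c d C i l = c (Suc i) + pic n c d C (Suc i) l"
  using assms by (cases "l \<le> n") (auto simp: pic_def sum.atLeast_Suc_atMost)

lemma pic_diag: "i \<le> n \<Longrightarrow> pic n c d C i i = - d i"
  unfolding pic_def by simp

lemma pic_last: "pic n c d C n (n + 1) = C"
  unfolding pic_def by simp

lemma primal_minus_dual_eq:
  fixes w v y u s c d :: "nat \<Rightarrow> real"
  assumes "n \<ge> 1" "w 1 = 0" "\<forall>i\<in>{1..n}. u i - s i = w (Suc i) - v i - w i"
  shows "(\<Sum>i=1..n. c i * w i + d i * v i) + C * w (n + 1) - (\<Sum>i=1..n. y i * (u i - s i))
       = (\<Sum>i=1..n-1. (c (Suc i) - y i + y (Suc i)) * w (Suc i)) + (C - y n) * w (n + 1)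
         + (\<Sum>i=1..n. (d i + y i) * v i)"
proof -
  have shift: "(\<Sum>i=1..n. f i) = f 1 + (\<Sum>i=1..n-1. f (Suc i))" for f :: "nat \<Rightarrow> real"
    using assms(1) sum.shift_bounds_cl_Suc_ivl[of f 1 "n - 1"] by (simp add: sum.atLeast_Suc_atMost)
  have last: "(\<Sum>i=1..n. f i) = (\<Sum>i=1..n-1. f i) + f n" for f :: "nat \<Rightarrow> real"
    using assms(1) by (cases n) auto
  have "(\<Sum>i=1..n. y i * (u i - s i)) = (\<Sum>i=1..n. y i * w (Suc i) - y i * v i - y i * w i)"
    using assms(3) by (intro sum.cong) (simp_all add: right_diff_distrib)
  then show ?thesis
    using shift[of "\<lambda>i. c i * w i"] shift[of "\<lambda>i. y i * w i"] last[of "\<lambda>i. y i * w (Suc i)"] assms(2)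
    by (simp add: sum.distrib sum_subtractf algebra_simps)
qed

lemma weak_duality:
  assumes n: "n \<ge> 1" and y: "dual_feasible n c d C y"
    and bal: "\<forall>i\<in>{2..n+1}. w i - v (i-1) = u (i-1) + w (i-1) - s (i-1)"
    and w: "\<forall>i\<in>{1..n+1}. w i \<ge> 0" "w 1 = 0" and v: "\<forall>i\<in>{1..n}. v i \<ge> 0"
  shows "(\<Sum>i=1..n. y i * (u i - s i)) \<le> (\<Sum>i=1..n. c i * w i + d i * v i) + C * w (n + 1)"
proof -
  have "\<forall>i\<in>{1..n}. u i - s i = w (Suc i) - v i - w i"
    using bal by (auto dest: bspec[of _ _ "Suc _"])
  note gap = primal_minus_dual_eq[OF n w(2) this, of c d C y]
  have "0 \<le> (\<Sum>i=1..n-1. (c (Suc i) - y i + y (Suc i)) * w (Suc i))"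
  proof (intro sum_nonneg mult_nonneg_nonneg)
    fix i assume i: "i \<in> {1..n-1}"
    then have "y i \<le> c (Suc i) + y (Suc i)" using y unfolding dual_feasible_def by blast
    then show "0 \<le> c (Suc i) - y i + y (Suc i)" by linarith
    show "0 \<le> w (Suc i)" using w i by auto
  qed
  moreover have "0 \<le> (C - y n) * w (n + 1)"
    using y w n unfolding dual_feasible_def by auto
  moreover have "0 \<le> (\<Sum>i=1..n. (d i + y i) * v i)"
  proof (intro sum_nonneg mult_nonneg_nonneg)
    fix i assume i: "i \<in> {1..n}"
    then have "- d i \<le> y i" using y unfolding dual_feasible_def by blast
    then show "0 \<le> d i + y i" by linarith
    show "0 \<le> v i" using v i by auto
  qed
  ultimately show ?thesis using gap by linarith
qed

definition greedy_w :: "(nat \<Rightarrow> real) \<Rightarrow> (nat \<Rightarrow> real) \<Rightarrow> nat \<Rightarrow> real" where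
  "greedy_w s u i = max 0 (net_excess s u (i - 1))"

definition greedy_v :: "(nat \<Rightarrow> real) \<Rightarrow> (nat \<Rightarrow> real) \<Rightarrow> nat \<Rightarrow> real" where
  "greedy_v s u i = max 0 (- net_excess s u i)"

lemma greedy_balance: "i \<ge> 1 \<Longrightarrow> u i - s i = greedy_w s u (Suc i) - greedy_v s u i - greedy_w s u i"
  by (cases i) (auto simp: greedy_w_def greedy_v_def)

lemma greedy_feasible:
  "\<forall>i\<in>{2..n+1}. greedy_w s u i - greedy_v s u (i-1) = u (i-1) + greedy_w s u (i-1) - s (i-1)"
  "\<forall>i\<in>{1..n+1}. greedy_w s u i \<ge> 0" "greedy_w s u 1 = 0" "\<forall>i\<in>{1..n}. greedy_v s u i \<ge> 0"
proof -
  show "\<forall>i\<in>{2..n+1}. greedy_w s u i - greedy_v s u (i-1) = u (i-1) + greedy_w s u (i-1) - s (i-1)"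
  proof
    fix i assume "i \<in> {2..n+1}"
    then obtain m where "i = Suc m" "m \<ge> 1" by (cases i) auto
    then show "greedy_w s u i - greedy_v s u (i-1) = u (i-1) + greedy_w s u (i-1) - s (i-1)"
      using greedy_balance[of m u s] by simp
  qed
qed (auto simp: greedy_w_def greedy_v_def)

text \<open>Complementary slackness: every slack term of \<open>primal_minus_dual_eq\<close> vanishes for the
  greedy solution paired with the dual \<open>pic i (clearing_stage i)\<close>.\<close>
lemma greedy_cost:
  assumes n: "n \<ge> 1"
  shows "(\<Sum>i=1..n. c i * greedy_w s u i + d i * greedy_v s u i) + C * greedy_w s u (n + 1)
       = (\<Sum>i=1..n. pic n c d C i (clearing_stage n s u i) * (u i - s i))"
proof -
  let ?y = "\<lambda>i. pic n c d C i (clearing_stage n s u i)"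
  have bal: "\<forall>i\<in>{1..n}. u i - s i = greedy_w s u (Suc i) - greedy_v s u i - greedy_w s u i"
    using greedy_balance by auto
  have z1: "(\<Sum>i=1..n-1. (c (Suc i) - ?y i + ?y (Suc i)) * greedy_w s u (Suc i)) = 0"
  proof (intro sum.neutral ballI)
    fix i assume i: "i \<in> {1..n-1}"
    show "(c (Suc i) - ?y i + ?y (Suc i)) * greedy_w s u (Suc i) = 0"
    proof (cases "net_excess s u i > 0")
    case True
    then have "clearing_stage n s u i = clearing_stage n s u (Suc i)"
      using i by (intro clearing_stage_Suc) auto
    moreover have "Suc i \<le> clearing_stage n s u (Suc i)" "clearing_stage n s u (Suc i) \<le> n + 1"
      using clearing_stage_bounds[of "Suc i" n s u] i by auto
    ultimately show ?thesis using pic_Suc[of i n "clearing_stage n s u (Suc i)" c d C] i by simp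
  qed (simp add: greedy_w_def)
  qed
  have z2: "(C - ?y n) * greedy_w s u (n + 1) = 0"
  proof (cases "net_excess s u n > 0")
    case True
    then have "clearing_stage n s u n = n + 1"
      using clearing_stage_Suc[of n n s u] clearing_stage_bounds[of "Suc n" n s u] by simp
    then show ?thesis using pic_last[of n c d C] by simp
  qed (simp add: greedy_w_def)
  have z3: "(\<Sum>i=1..n. (d i + ?y i) * greedy_v s u i) = 0"
  proof (intro sum.neutral ballI)
    fix i assume i: "i \<in> {1..n}"
    show "(d i + ?y i) * greedy_v s u i = 0"
    proof (cases "net_excess s u i < 0")
      case True
      then show ?thesis using i clearing_stage_self[of i n s u] pic_diag[of i n c d C] by simp
    qed (simp add: greedy_v_def)
  qed
  show ?thesis
    using primal_minus_dual_eq[OF n greedy_feasible(3) bal, of c d C ?y] z1 z2 z3 by linarith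
qed

locale second_stage =
  fixes n :: nat and c d :: "nat \<Rightarrow> real" and C :: real
  assumes n_pos: "n \<ge> 1"
    and c_nonneg: "\<forall>i\<in>{1..n}. c i \<ge> 0" and d_nonneg: "\<forall>i\<in>{1..n}. d i \<ge> 0"
    and C_nonneg: "C \<ge> 0"
    and d_increment: "\<forall>i\<in>{1..n-1}. d (i+1) - d i \<le> c (i+1)"
begin

lemma pic_ge_neg_d:
  assumes i: "i \<in> {1..n}" and l: "i \<le> l" "l \<le> n + 1"
  shows "- d i \<le> pic n c d C i l"
proof (cases "l \<le> n")
  case True
  from l(1) have "- d i \<le> - d l + (\<Sum>q=i+1..l. c q)"
  proof (induction l rule: dec_induct)
    case (step m)
    have "d (Suc m) - d m \<le> c (Suc m)" using d_increment step.hyps i True by auto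
    then show ?case using step by simp
  qed simp
  then show ?thesis using True unfolding pic_def by simp
next
  case False
  have "0 \<le> (\<Sum>q=i+1..n. c q)" using c_nonneg i by (intro sum_nonneg) auto
  moreover have "0 \<le> d i" using d_nonneg i by blast
  ultimately show ?thesis using False C_nonneg unfolding pic_def by auto
qed

lemma admissible_ends_dual_feasible:
  assumes \<sigma>: "admissible_ends n \<sigma>"
  shows "dual_feasible n c d C (\<lambda>i. pic n c d C i (\<sigma> i))"
  unfolding dual_feasible_def
proof (intro conjI ballI)
  fix i assume "i \<in> {1..n}"
  then show "- d i \<le> pic n c d C i (\<sigma> i)"
    using pic_ge_neg_d \<sigma> unfolding admissible_ends_def by auto
next
  fix i assume i: "i \<in> {1..n-1}"
  have range: "Suc i \<le> \<sigma> (Suc i)" "\<sigma> (Suc i) \<le> n + 1" and "\<sigma> i = i \<or> \<sigma> i = \<sigma> (Suc i)"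
    using \<sigma> i unfolding admissible_ends_def by auto
  then consider "\<sigma> i = i" | "\<sigma> i = \<sigma> (Suc i)" by blast
  then show "pic n c d C i (\<sigma> i) \<le> c (Suc i) + pic n c d C (Suc i) (\<sigma> (Suc i))"
  proof cases
    case 1
    have "d (Suc i) - d i \<le> c (Suc i)" using d_increment i by auto
    moreover have "- d (Suc i) \<le> pic n c d C (Suc i) (\<sigma> (Suc i))"
      using pic_ge_neg_d[of "Suc i" "\<sigma> (Suc i)"] i range by auto
    moreover have "pic n c d C i (\<sigma> i) = - d i" using 1 i pic_diag[of i n c d C] by force
    ultimately show ?thesis by linarith
  qed (use pic_Suc[of i n "\<sigma> (Suc i)" c d C] i range in simp)
next
  have "\<sigma> n = n \<or> \<sigma> n = n + 1" using \<sigma> n_pos unfolding admissible_ends_def by force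
  moreover have "0 \<le> d n" using d_nonneg n_pos by auto
  ultimately show "pic n c d C n (\<sigma> n) \<le> C"
    using pic_diag[of n n c d C] pic_last[of n c d C] C_nonneg by (elim disjE) simp_all
qed

lemma fval_eq_clearing_sum:
  "fval n c d C s u = (\<Sum>i=1..n. pic n c d C i (clearing_stage n s u i) * (u i - s i))"
  and admissible_sum_le_fval:
  "admissible_ends n \<sigma> \<Longrightarrow> (\<Sum>i=1..n. pic n c d C i (\<sigma> i) * (u i - s i)) \<le> fval n c d C s u"
proof -
  define S where "S = {(\<Sum>i=1..n. c i * w i + d i * v i) + C * w (n+1) | w v.
      (\<forall>i\<in>{2..n+1}. w i - v (i-1) = u (i-1) + w (i-1) - s (i-1)) \<and>
      (\<forall>i\<in>{1..n+1}. w i \<ge> 0) \<and> w 1 = 0 \<and> (\<forall>i\<in>{1..n}. v i \<ge> 0)}"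
  have lower: "(\<Sum>i=1..n. pic n c d C i (\<sigma> i) * (u i - s i)) \<le> x"
    if "admissible_ends n \<sigma>" "x \<in> S" for \<sigma> x
    using that weak_duality[OF n_pos admissible_ends_dual_feasible] unfolding S_def by blast
  have greedy: "(\<Sum>i=1..n. pic n c d C i (clearing_stage n s u i) * (u i - s i)) \<in> S"
    unfolding S_def greedy_cost[OF n_pos, symmetric] using greedy_feasible by blast
  show eq: "fval n c d C s u = (\<Sum>i=1..n. pic n c d C i (clearing_stage n s u i) * (u i - s i))"
    unfolding fval_def S_def[symmetric]
    by (rule cInf_eq_minimum[OF greedy lower[OF admissible_ends_clearing_stage]])
  show "admissible_ends n \<sigma> \<Longrightarrow> (\<Sum>i=1..n. pic n c d C i (\<sigma> i) * (u i - s i)) \<le> fval n c d C s u"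
    unfolding eq by (rule lower[OF _ greedy])
qed

end

lemma space_Mn: "space (Mn n) = PiE {1..n} (\<lambda>_. UNIV)"
  by (simp add: Mn_def space_PiM)

lemma component_measurable_Mn: "i \<in> {1..n} \<Longrightarrow> (\<lambda>u. u i) \<in> borel_measurable (Mn n)"
  unfolding Mn_def by (rule measurable_component_singleton)

lemma Uset_sets: "Uset n uL uU \<in> sets (Mn n)"
  unfolding Uset_def Mn_def by (intro sets_PiM_I_finite) auto

lemma Uset_subset_space: "Uset n uL uU \<subseteq> space (Mn n)"
  unfolding Uset_def space_Mn by (auto simp: PiE_iff)

lemma singleton_sets_Mn: "v \<in> space (Mn n) \<Longrightarrow> {v} \<in> sets (Mn n)"
proof -
  assume "v \<in> space (Mn n)"
  then have "{v} = PiE {1..n} (\<lambda>i. {v i})"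
    by (intro PiE_singleton[symmetric]) (simp add: space_Mn PiE_iff)
  also have "\<dots> \<in> sets (Mn n)" unfolding Mn_def by (intro sets_PiM_I_finite) auto
  finally show ?thesis .
qed

lemma pair_component_measurable_Mn:
  assumes "i \<in> {1..n}"
  shows "(\<lambda>x. fst x i) \<in> borel_measurable (Mn n \<Otimes>\<^sub>M Mn n)"
    and "(\<lambda>x. snd x i) \<in> borel_measurable (Mn n \<Otimes>\<^sub>M Mn n)"
  by (rule measurable_compose[OF measurable_fst component_measurable_Mn[OF assms]],
      rule measurable_compose[OF measurable_snd component_measurable_Mn[OF assms]])

lemma l1_dist_measurable:
  "(\<lambda>x. \<Sum>i=1..n. \<bar>fst x i - snd x i\<bar>) \<in> borel_measurable (Mn n \<Otimes>\<^sub>M Mn n)"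
  using pair_component_measurable_Mn
  by (intro borel_measurable_sum borel_measurable_abs borel_measurable_diff) auto

lemma net_excess_measurable: "m \<le> n \<Longrightarrow> (\<lambda>u. net_excess s u m) \<in> borel_measurable (Mn n)"
proof (induction m)
  case (Suc m)
  then show ?case using component_measurable_Mn[of "Suc m" n] by simp
qed simp

lemma clearing_stage_measurable:
  "(\<lambda>u. clearing_stage n s u i) \<in> measurable (Mn n) (count_space UNIV)"
  unfolding clearing_stage_def
proof (rule measurable_Least)
  fix l
  have [measurable]: "(\<lambda>u. net_excess s u (min l n)) \<in> borel_measurable (Mn n)"
    by (rule net_excess_measurable) simp
  show "(\<lambda>u. i \<le> l \<and> (n + 1 \<le> l \<or> net_excess s u (min l n) \<le> 0)) \<in> measurable (Mn n) (count_space UNIV)"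
    by measurable
qed

context second_stage
begin

lemma fval_measurable: "(\<lambda>u. fval n c d C s u) \<in> borel_measurable (Mn n)"
  unfolding fval_eq_clearing_sum
  by (intro borel_measurable_sum borel_measurable_times borel_measurable_diff
      measurable_compose[OF clearing_stage_measurable] component_measurable_Mn) auto

end

section \<open>Random interval partitions\<close>

definition covering_end :: "nat \<Rightarrow> (nat \<times> nat \<Rightarrow> nat) \<Rightarrow> nat \<Rightarrow> nat" where
  "covering_end n \<tau> i = snd (THE kl. kl \<in> {1..i} \<times> {i..n+1} \<and> \<tau> kl = 1)"

definition cover_count :: "(nat \<times> nat \<Rightarrow> nat) \<Rightarrow> nat \<Rightarrow> nat \<Rightarrow> real" where
  "cover_count \<tau> i l = (\<Sum>k=1..i. real (\<tau> (k, l)))"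

lemma Tset_zero_or_one:
  "\<tau> \<in> Tset n \<Longrightarrow> 1 \<le> k \<Longrightarrow> k \<le> l \<Longrightarrow> l \<le> n + 1 \<Longrightarrow> \<tau> (k, l) = 0 \<or> \<tau> (k, l) = 1"
  unfolding Tset_def Pairs_def by (auto simp: PiE_iff)

lemma Tset_unique_cover:
  assumes t: "\<tau> \<in> Tset n" and i: "i \<in> {1..n+1}"
  shows "\<exists>kl. {kl'\<in>{1..i} \<times> {i..n+1}. \<tau> kl' = 1} = {kl}"
proof -
  have "(\<Sum>k=1..i. \<Sum>l=i..n+1. \<tau> (k, l)) = (\<Sum>(k, l)\<in>{1..i} \<times> {i..n+1}. \<tau> (k, l))"
    by (rule sum.cartesian_product)
  also have "\<dots> = (\<Sum>kl\<in>{1..i} \<times> {i..n+1}. of_bool (\<tau> kl = 1))"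
  proof (intro sum.cong refl)
    fix kl assume "kl \<in> {1..i} \<times> {i..n+1}"
    then show "(case kl of (k, l) \<Rightarrow> \<tau> (k, l)) = of_bool (\<tau> kl = 1)"
      using Tset_zero_or_one[OF t, of "fst kl" "snd kl"] i by (cases kl) auto
  qed
  finally have "card {kl'\<in>{1..i} \<times> {i..n+1}. \<tau> kl' = 1} = 1"
    using t i unfolding Tset_def by (simp add: Int_def)
  then show ?thesis by (simp add: card_1_singleton_iff)
qed

lemma Tset_covering_pair:
  assumes t: "\<tau> \<in> Tset n" and i: "i \<in> {1..n+1}"
  obtains k where "k \<in> {1..i}" "covering_end n \<tau> i \<in> {i..n+1}" "\<tau> (k, covering_end n \<tau> i) = 1"
    "\<And>k' l. k' \<in> {1..i} \<Longrightarrow> l \<in> {i..n+1} \<Longrightarrow> \<tau> (k', l) = 1 \<Longrightarrow> k' = k \<and> l = covering_end n \<tau> i"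
proof -
  obtain k l where kl: "{kl'\<in>{1..i} \<times> {i..n+1}. \<tau> kl' = 1} = {(k, l)}"
    using Tset_unique_cover[OF t i] by auto
  then have mem: "kl \<in> {1..i} \<times> {i..n+1} \<and> \<tau> kl = 1 \<longleftrightarrow> kl = (k, l)" for kl
    by blast
  then have end_eq: "covering_end n \<tau> i = l" by (simp add: covering_end_def)
  show ?thesis
  proof (rule that[of k])
    show "k \<in> {1..i}" "covering_end n \<tau> i \<in> {i..n+1}" "\<tau> (k, covering_end n \<tau> i) = 1"
      using mem[of "(k, l)"] end_eq by auto
    fix k' l' assume "k' \<in> {1..i}" "l' \<in> {i..n+1}" "\<tau> (k', l') = 1"
    then show "k' = k \<and> l' = covering_end n \<tau> i" using mem[of "(k', l')"] end_eq by simp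
  qed
qed

lemma cover_count_eq:
  assumes t: "\<tau> \<in> Tset n" and i: "i \<in> {1..n+1}" and l: "l \<in> {i..n+1}"
  shows "cover_count \<tau> i l = of_bool (l = covering_end n \<tau> i)"
proof -
  obtain k0 where k0: "k0 \<in> {1..i}" "covering_end n \<tau> i \<in> {i..n+1}" "\<tau> (k0, covering_end n \<tau> i) = 1"
    and uniq: "\<And>k' l. k' \<in> {1..i} \<Longrightarrow> l \<in> {i..n+1} \<Longrightarrow> \<tau> (k', l) = 1 \<Longrightarrow> k' = k0 \<and> l = covering_end n \<tau> i"
    using Tset_covering_pair[OF t i] by blast
  have "cover_count \<tau> i l = (\<Sum>k=1..i. of_bool (\<tau> (k, l) = 1))"
    unfolding cover_count_def
  proof (intro sum.cong refl)
    fix k assume "k \<in> {1..i}"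
    then show "real (\<tau> (k, l)) = of_bool (\<tau> (k, l) = 1)"
      using Tset_zero_or_one[OF t, of k l] l i by auto
  qed
  also have "\<dots> = real (card ({1..i} \<inter> {k. \<tau> (k, l) = 1}))" by simp
  also have "{1..i} \<inter> {k. \<tau> (k, l) = 1} = (if l = covering_end n \<tau> i then {k0} else {})"
  proof (intro equalityI subsetI)
    fix k assume "k \<in> {1..i} \<inter> {k. \<tau> (k, l) = 1}"
    then show "k \<in> (if l = covering_end n \<tau> i then {k0} else {})" using uniq[of k l] l by auto
  qed (use k0 in \<open>auto split: if_splits\<close>)
  finally show ?thesis by simp
qed

lemma sum_cover_count_mult:
  assumes "\<tau> \<in> Tset n" "i \<in> {1..n+1}"
  shows "(\<Sum>l=i..n+1. cover_count \<tau> i l * F l) = F (covering_end n \<tau> i)"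
proof -
  have "covering_end n \<tau> i \<in> {i..n+1}" using Tset_covering_pair[OF assms] by blast
  then have "(\<Sum>l=i..n+1. of_bool (l = covering_end n \<tau> i) * F l) = F (covering_end n \<tau> i)"
    by (simp add: if_distrib sum.delta' cong: if_cong)
  then show ?thesis using cover_count_eq[OF assms] by simp
qed

lemma admissible_ends_covering_end:
  assumes t: "\<tau> \<in> Tset n"
  shows "admissible_ends n (covering_end n \<tau>)"
proof -
  have "covering_end n \<tau> i = covering_end n \<tau> (Suc i)"
    if i: "i \<in> {1..n-1}" and ne: "covering_end n \<tau> i \<noteq> i" for i
  proof -
    have i': "i \<in> {1..n+1}" "Suc i \<in> {1..n+1}" using i by auto
    obtain k where k: "k \<in> {1..i}" "covering_end n \<tau> i \<in> {i..n+1}" "\<tau> (k, covering_end n \<tau> i) = 1"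
      using Tset_covering_pair[OF t i'(1)] by blast
    obtain k' where "\<And>k'' l. k'' \<in> {1..Suc i} \<Longrightarrow> l \<in> {Suc i..n+1} \<Longrightarrow> \<tau> (k'', l) = 1
        \<Longrightarrow> k'' = k' \<and> l = covering_end n \<tau> (Suc i)"
      using Tset_covering_pair[OF t i'(2)] by blast
    moreover have "k \<in> {1..Suc i}" "covering_end n \<tau> i \<in> {Suc i..n+1}" using k ne by auto
    ultimately show ?thesis using k(3) by blast
  qed
  moreover have "i \<le> covering_end n \<tau> i \<and> covering_end n \<tau> i \<le> n + 1" if "i \<in> {1..n}" for i
  proof -
    have "i \<in> {1..n+1}" using that by simp
    then show ?thesis using Tset_covering_pair[OF t] by (metis atLeastAtMost_iff)
  qed
  ultimately show ?thesis unfolding admissible_ends_def by blast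
qed

lemma uvec_covering_end:
  assumes "\<tau> \<in> Tset n" "i \<in> {1..n}"
  shows "uvec n uL uU uh p q r j \<tau> i = ustar uL uU uh p q r i (covering_end n \<tau> i) j"
proof -
  have "uvec n uL uU uh p q r j \<tau> i = (\<Sum>l=i..n+1. cover_count \<tau> i l * ustar uL uU uh p q r i l j)"
    using assms(2) by (simp add: uvec_def cover_count_def)
  also have "\<dots> = ustar uL uU uh p q r i (covering_end n \<tau> i) j"
    by (rule sum_cover_count_mult[OF assms(1)]) (use assms(2) in simp)
  finally show ?thesis .
qed

lemma finite_Tset: "finite (Tset n)"
proof -
  have "finite (Pairs n)"
    unfolding Pairs_def by (rule finite_subset[of _ "{1..n+1} \<times> {1..n+1}"]) auto
  then have "finite (PiE (Pairs n) (\<lambda>_. {0::nat, 1}))" by (intro finite_PiE) auto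
  then show ?thesis unfolding Tset_def by (rule finite_subset[rotated]) blast
qed

lemma pmf_embed_pmf_finite_support:
  fixes f :: "'a \<Rightarrow> real"
  assumes A: "finite A" and nn: "\<And>x. 0 \<le> f x" and z: "\<And>x. x \<notin> A \<Longrightarrow> f x = 0" and s: "sum f A = 1"
  shows "pmf (embed_pmf f) x = f x" "set_pmf (embed_pmf f) = {x. f x \<noteq> 0}"
proof -
  have "(\<integral>\<^sup>+x. ennreal (f x) \<partial>count_space UNIV) = (\<integral>\<^sup>+x. ennreal (f x) * indicator A x \<partial>count_space UNIV)"
    by (intro nn_integral_cong) (auto simp: z split: split_indicator)
  also have "\<dots> = (\<integral>\<^sup>+x. ennreal (f x) \<partial>count_space A)"
    by (simp add: nn_integral_count_space_indicator)
  also have "\<dots> = (\<Sum>x\<in>A. ennreal (f x))" using A by (simp add: nn_integral_count_space_finite)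
  also have "\<dots> = ennreal (sum f A)" using nn by (simp add: sum_ennreal)
  finally have p: "(\<integral>\<^sup>+x. ennreal (f x) \<partial>count_space UNIV) = 1" using s by simp
  show "pmf (embed_pmf f) x = f x" by (rule pmf_embed_pmf[OF nn p])
  show "set_pmf (embed_pmf f) = {x. f x \<noteq> 0}" by (rule set_embed_pmf[OF nn p])
qed

lemma measure_pmf_prob_bind_pmf:
  "measure_pmf.prob (bind_pmf M N) A = measure_pmf.expectation M (\<lambda>x. measure_pmf.prob (N x) A)"
proof -
  have "emeasure (measure_pmf (bind_pmf M N)) A = (\<integral>\<^sup>+x. emeasure (N x) A \<partial>M)"
    by (rule emeasure_bind_pmf)
  also have "\<dots> = (\<integral>\<^sup>+x. ennreal (measure_pmf.prob (N x) A) \<partial>M)"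
    by (intro nn_integral_cong) (simp add: measure_pmf.emeasure_eq_measure)
  also have "\<dots> = ennreal (measure_pmf.expectation M (\<lambda>x. measure_pmf.prob (N x) A))"
    by (intro nn_integral_eq_integral measure_pmf.integrable_const_bound[where B=1]) auto
  finally show ?thesis
    by (simp add: measure_pmf.emeasure_eq_measure integral_nonneg_AE)
qed

lemma expectation_if_eq_prob: "measure_pmf.expectation M (\<lambda>x. if P x then 1 else 0) = measure_pmf.prob M {x. P x}"
proof -
  have "(\<lambda>x. if P x then 1 else (0::real)) = indicator {x. P x}" by (auto simp: indicator_def)
  thus ?thesis by (simp add: measure_pmf.emeasure_eq_measure)
qed

text \<open>The marginals are realised by a Markov chain whose state after stage \<open>i\<close> is the set of
  chosen intervals \<open>(k, l)\<close> with \<open>k \<le> i\<close> together with the end of the last one. When that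
  interval ends at \<open>i\<close>, the next interval \<open>(i+1, l)\<close> is drawn with probability
  \<open>p (i+1) l / P{current end = i}\<close>; inductively \<open>P{current end = l} = cum i l\<close> for \<open>l > i\<close>.\<close>

locale cumulative_marginals =
  fixes n :: nat and pp :: "nat \<Rightarrow> nat \<Rightarrow> real"
  assumes n_pos: "n \<ge> 1"
    and sum_cum_eq_1: "\<forall>i\<in>{1..n}. (\<Sum>l=i..n+1. \<Sum>k=1..i. pp k l) = 1"
    and pp_nonneg: "\<forall>k\<in>{1..n}. \<forall>l\<in>{k..n+1}. pp k l \<ge> 0"
begin

definition cum :: "nat \<Rightarrow> nat \<Rightarrow> real" where "cum i l = (\<Sum>k=1..i. pp k l)"
definition mass_ending :: "nat \<Rightarrow> real" where "mass_ending i = (if i = 0 then 1 else cum i i)"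
definition next_weight :: "nat \<Rightarrow> nat \<Rightarrow> real" where
  "next_weight i l = (if Suc i \<le> l \<and> l \<le> n+1 then pp (Suc i) l / mass_ending i else 0)"
definition next_end :: "nat \<Rightarrow> nat pmf" where
  "next_end i = (if i < n \<and> mass_ending i > 0 then embed_pmf (next_weight i) else return_pmf (n+1))"
definition chain_step :: "nat \<Rightarrow> (nat \<times> nat) set \<times> nat \<Rightarrow> ((nat \<times> nat) set \<times> nat) pmf" where
  "chain_step i x = (if snd x = i then map_pmf (\<lambda>l. (insert (Suc i, l) (fst x), l)) (next_end i) else return_pmf x)"

primrec chain :: "nat \<Rightarrow> ((nat \<times> nat) set \<times> nat) pmf" where
  "chain 0 = return_pmf ({}, 0)"
| "chain (Suc i) = bind_pmf (chain i) (chain_step i)"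

lemma cum_nonneg: "i \<le> l \<Longrightarrow> l \<le> n+1 \<Longrightarrow> i \<le> n \<Longrightarrow> cum i l \<ge> 0"
  unfolding cum_def using pp_nonneg by (intro sum_nonneg) auto

lemma mass_ending_nonneg: "i \<le> n \<Longrightarrow> mass_ending i \<ge> 0"
  unfolding mass_ending_def using cum_nonneg by auto

lemma sum_pp_Suc_eq_mass_ending: assumes "i < n" shows "(\<Sum>l=Suc i..n+1. pp (Suc i) l) = mass_ending i"
proof (cases "i = 0")
  case True
  have "1 \<in> {1..n}" using n_pos by auto
  from bspec[OF sum_cum_eq_1 this] have "(\<Sum>l=1..n+1. \<Sum>k=1..1. pp k l) = 1" .
  thus ?thesis using True by (simp add: mass_ending_def)
next
  case False
  have i1: "Suc i \<in> {1..n}" "i \<in> {1..n}" using assms False by auto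
  have e1: "(\<Sum>l=Suc i..n+1. cum (Suc i) l) = 1" using sum_cum_eq_1 i1 unfolding cum_def by blast
  have e0: "(\<Sum>l=i..n+1. cum i l) = 1" using sum_cum_eq_1 i1 unfolding cum_def by blast
  have "(\<Sum>l=i..n+1. cum i l) = cum i i + (\<Sum>l=Suc i..n+1. cum i l)"
    using assms by (simp add: sum.atLeast_Suc_atMost)
  moreover have "(\<Sum>l=Suc i..n+1. cum (Suc i) l) = (\<Sum>l=Suc i..n+1. cum i l) + (\<Sum>l=Suc i..n+1. pp (Suc i) l)"
    unfolding cum_def by (simp add: sum.distrib)
  ultimately show ?thesis using e0 e1 False by (simp add: mass_ending_def)
qed

lemma sum_next_weight: assumes "i < n" "mass_ending i > 0" shows "sum (next_weight i) {Suc i..n+1} = 1"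
proof -
  have "sum (next_weight i) {Suc i..n+1} = (\<Sum>l=Suc i..n+1. pp (Suc i) l / mass_ending i)"
    by (intro sum.cong) (auto simp: next_weight_def)
  also have "\<dots> = (\<Sum>l=Suc i..n+1. pp (Suc i) l) / mass_ending i" by (rule sum_divide_distrib[symmetric])
  finally have "sum (next_weight i) {Suc i..n+1} = (\<Sum>l=Suc i..n+1. pp (Suc i) l) / mass_ending i" .
  thus ?thesis using sum_pp_Suc_eq_mass_ending[OF assms(1)] assms(2) by simp
qed

lemma pmf_next_end: assumes "i < n" "mass_ending i > 0" shows "pmf (next_end i) l = next_weight i l"
  and "set_pmf (next_end i) = {l. next_weight i l \<noteq> 0}"
proof -
  have nn: "\<And>l. 0 \<le> next_weight i l" unfolding next_weight_def using pp_nonneg assms mass_ending_nonneg[of i]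
    by (auto intro!: divide_nonneg_pos)
  have z: "\<And>l. l \<notin> {Suc i..n+1} \<Longrightarrow> next_weight i l = 0" unfolding next_weight_def by auto
  show "pmf (next_end i) l = next_weight i l" "set_pmf (next_end i) = {l. next_weight i l \<noteq> 0}"
    using pmf_embed_pmf_finite_support[of "{Suc i..n+1}" "next_weight i", OF _ nn z sum_next_weight[OF assms]] assms
    by (auto simp: next_end_def)
qed

lemma set_pmf_next_end_subset: assumes "i \<le> n" shows "set_pmf (next_end i) \<subseteq> {Suc i..n+1}"
proof (cases "i < n \<and> mass_ending i > 0")
  case True thus ?thesis using pmf_next_end(2)[of i] by (auto simp: next_weight_def split: if_splits)
next
  case False thus ?thesis using assms by (auto simp: next_end_def)
qed

lemma mass_ending_mult_pmf_next_end: assumes "i < n" "Suc i \<le> l" "l \<le> n+1" shows "mass_ending i * pmf (next_end i) l = pp (Suc i) l"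
proof (cases "mass_ending i > 0")
  case True thus ?thesis using pmf_next_end(1)[OF assms(1) True, of l] assms by (simp add: next_weight_def)
next
  case False
  hence z: "mass_ending i = 0" using mass_ending_nonneg[of i] assms by auto
  have "\<forall>l'\<in>{Suc i..n+1}. pp (Suc i) l' \<ge> 0" using pp_nonneg assms by auto
  moreover have "sum (pp (Suc i)) {Suc i..n+1} = 0" using sum_pp_Suc_eq_mass_ending[OF assms(1)] z by simp
  ultimately have "\<forall>l'\<in>{Suc i..n+1}. pp (Suc i) l' = 0"
    using sum_nonneg_eq_0_iff[of "{Suc i..n+1}" "pp (Suc i)"] by auto
  thus ?thesis using z assms by auto
qed

definition chain_inv :: "nat \<Rightarrow> (nat \<times> nat) set \<times> nat \<Rightarrow> bool" where
  "chain_inv i x \<longleftrightarrow> i \<le> snd x \<and> snd x \<le> n+1 \<and>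
     (\<forall>kl\<in>fst x. 1 \<le> fst kl \<and> fst kl \<le> snd kl \<and> snd kl \<le> snd x \<and> fst kl \<le> i) \<and>
     (\<forall>m\<in>{1..snd x}. card {kl\<in>fst x. fst kl \<le> m \<and> m \<le> snd kl} = 1) \<and> finite (fst x)"

lemma chain_inv_set_pmf: "i \<le> n+1 \<Longrightarrow> x \<in> set_pmf (chain i) \<Longrightarrow> chain_inv i x"
proof (induction i arbitrary: x)
  case 0 thus ?case by (auto simp: chain_inv_def)
next
  case (Suc i)
  from Suc.prems obtain y where y: "y \<in> set_pmf (chain i)" "x \<in> set_pmf (chain_step i y)" by auto
  have iy: "chain_inv i y" using Suc.IH[OF _ y(1)] Suc.prems by simp
  obtain S cur where yS: "y = (S, cur)" by (cases y)
  show ?case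
  proof (cases "cur = i")
    case False
    hence "x = y" using y(2) yS by (simp add: chain_step_def)
    thus ?thesis using iy False yS unfolding chain_inv_def by force
  next
    case True
    then obtain l where l: "l \<in> set_pmf (next_end i)" "x = (insert (Suc i, l) S, l)"
      using y(2) yS by (auto simp: chain_step_def)
    have lb: "Suc i \<le> l" "l \<le> n+1" using set_pmf_next_end_subset[of i] l Suc.prems by auto
    have old: "\<forall>kl\<in>S. 1 \<le> fst kl \<and> fst kl \<le> snd kl \<and> snd kl \<le> i \<and> fst kl \<le> i"
      using iy yS True unfolding chain_inv_def by auto
    have card_old: "\<forall>m\<in>{1..i}. card {kl\<in>S. fst kl \<le> m \<and> m \<le> snd kl} = 1"
      using iy yS True unfolding chain_inv_def by auto
    have cardx: "card {kl\<in>insert (Suc i, l) S. fst kl \<le> m \<and> m \<le> snd kl} = 1" if m: "m \<in> {1..l}" for m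
    proof (cases "m \<le> i")
      case True
      hence "{kl\<in>insert (Suc i, l) S. fst kl \<le> m \<and> m \<le> snd kl} = {kl\<in>S. fst kl \<le> m \<and> m \<le> snd kl}"
        by auto
      thus ?thesis using card_old True m by auto
    next
      case False
      hence "{kl\<in>insert (Suc i, l) S. fst kl \<le> m \<and> m \<le> snd kl} = {(Suc i, l)}"
        using old m by force
      thus ?thesis by simp
    qed
    show ?thesis unfolding chain_inv_def l(2) using lb old cardx iy yS by (auto simp: chain_inv_def)
  qed
qed

lemma finite_set_pmf_chain: "finite (set_pmf (chain i))"
proof (induction i)
  case 0 thus ?case by simp
next
  case (Suc i)
  have "finite (set_pmf (chain_step i x))" for x
  proof -
    have "finite (set_pmf (next_end i))"
    proof (cases "i < n \<and> mass_ending i > 0")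
      case True
      hence "set_pmf (next_end i) \<subseteq> {Suc i..n+1}" using pmf_next_end(2)[of i] by (auto simp: next_weight_def split: if_splits)
      thus ?thesis using finite_subset by blast
    qed (auto simp: next_end_def)
    thus ?thesis by (simp add: chain_step_def)
  qed
  thus ?case using Suc by simp
qed

lemma integrable_chain: "integrable (measure_pmf (chain i)) (f :: _ \<Rightarrow> real)"
  by (rule integrable_measure_pmf_finite[OF finite_set_pmf_chain])

lemma prob_chain_step_end:
  assumes "Suc i \<le> l"
  shows "measure_pmf.prob (chain_step i x) {y. snd y = l} =
         (if snd x = i then pmf (next_end i) l else (if snd x = l then 1 else 0))"
proof (cases "snd x = i")
  case True
  have "measure_pmf.prob (chain_step i x) {y. snd y = l} = measure_pmf.prob (next_end i) {l}"
    using True by (simp add: chain_step_def vimage_def)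
  thus ?thesis using True by (simp add: measure_pmf_single)
qed (simp add: chain_step_def indicator_def)

lemma prob_chain_end: "i \<le> n \<Longrightarrow> l \<in> {i..n+1} \<Longrightarrow>
   measure_pmf.prob (chain i) {x. snd x = l} = (if l = i then mass_ending i else cum i l)"
proof (induction i arbitrary: l)
  case 0
  thus ?case by (auto simp: mass_ending_def cum_def indicator_def)
next
  case (Suc i)
  have il: "i < n" "Suc i \<le> l" "l \<le> n+1" using Suc.prems by auto
  have "measure_pmf.prob (chain (Suc i)) {x. snd x = l} =
     measure_pmf.expectation (chain i) (\<lambda>x. pmf (next_end i) l * (if snd x = i then 1 else 0) + (if snd x = l then 1 else 0))"
  proof -
    have "(\<lambda>x. measure_pmf.prob (chain_step i x) {y. snd y = l}) =
      (\<lambda>x. pmf (next_end i) l * (if snd x = i then 1 else 0) + (if snd x = l then 1 else 0))"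
      using il by (auto simp: fun_eq_iff prob_chain_step_end)
    thus ?thesis by (simp add: measure_pmf_prob_bind_pmf)
  qed
  also have "\<dots> = pmf (next_end i) l * measure_pmf.prob (chain i) {x. snd x = i} + measure_pmf.prob (chain i) {x. snd x = l}"
    by (simp add: integrable_chain expectation_if_eq_prob)
  also have "\<dots> = pmf (next_end i) l * mass_ending i + cum i l"
    using Suc.IH[of i] Suc.IH[of l] il by simp
  also have "\<dots> = pp (Suc i) l + cum i l" using mass_ending_mult_pmf_next_end[OF il] by (simp add: mult.commute)
  also have "\<dots> = cum (Suc i) l" by (simp add: cum_def)
  finally show ?case using il by (auto simp: mass_ending_def)
qed

lemma prob_chain_new_interval:
  assumes il: "i < n" "Suc i \<le> l" "l \<le> n+1"
  shows "measure_pmf.prob (chain (Suc i)) {x. (Suc i, l) \<in> fst x} = pp (Suc i) l"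
proof -
  have "measure_pmf.prob (chain (Suc i)) {x. (Suc i, l) \<in> fst x} =
     measure_pmf.expectation (chain i) (\<lambda>x. measure_pmf.prob (chain_step i x) {y. (Suc i, l) \<in> fst y})"
    by (simp add: measure_pmf_prob_bind_pmf)
  also have "\<dots> = measure_pmf.expectation (chain i) (\<lambda>x. pmf (next_end i) l * (if snd x = i then 1 else 0))"
  proof (intro integral_cong_AE)
    show "AE x in measure_pmf (chain i). measure_pmf.prob (chain_step i x) {y. (Suc i, l) \<in> fst y} =
        pmf (next_end i) l * (if snd x = i then 1 else 0)"
    proof (unfold AE_measure_pmf_iff, intro ballI)
      fix x assume x: "x \<in> set_pmf (chain i)"
      have iv: "chain_inv i x" using chain_inv_set_pmf[OF _ x] il by simp
      hence nS: "(Suc i, l) \<notin> fst x" unfolding chain_inv_def by auto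
      show "measure_pmf.prob (chain_step i x) {y. (Suc i, l) \<in> fst y} = pmf (next_end i) l * (if snd x = i then 1 else 0)"
      proof (cases "snd x = i")
        case True
        have "measure_pmf.prob (chain_step i x) {y. (Suc i, l) \<in> fst y} = measure_pmf.prob (next_end i) {l}"
          using True nS by (simp add: chain_step_def vimage_def)
        thus ?thesis using True by (simp add: measure_pmf_single)
      qed (use nS in \<open>simp add: chain_step_def indicator_def\<close>)
    qed
  qed auto
  also have "\<dots> = pmf (next_end i) l * measure_pmf.prob (chain i) {x. snd x = i}"
    by (simp add: expectation_if_eq_prob)
  also have "\<dots> = pmf (next_end i) l * mass_ending i" using prob_chain_end[of i i] il by simp
  also have "\<dots> = pp (Suc i) l" using mass_ending_mult_pmf_next_end[OF il] by (simp add: mult.commute)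
  finally show ?thesis .
qed

lemma prob_chain_old_interval:
  assumes "k \<le> i"
  shows "measure_pmf.prob (chain (Suc i)) {x. (k, l) \<in> fst x} = measure_pmf.prob (chain i) {x. (k, l) \<in> fst x}"
proof -
  have "\<And>x. measure_pmf.prob (chain_step i x) {y. (k, l) \<in> fst y} = (if (k,l) \<in> fst x then 1 else 0)"
    using assms by (auto simp: chain_step_def vimage_def indicator_def)
  thus ?thesis by (simp add: measure_pmf_prob_bind_pmf expectation_if_eq_prob)
qed

lemma prob_chain_final_interval:
  assumes "k \<in> {1..n}" "l \<in> {k..n+1}"
  shows "measure_pmf.prob (chain (n+1)) {x. (k, l) \<in> fst x} = pp k l"
proof -
  have "\<forall>m. k + m \<le> n+1 \<longrightarrow> measure_pmf.prob (chain (k + m)) {x. (k, l) \<in> fst x} = pp k l"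
  proof
    fix m show "k + m \<le> n+1 \<longrightarrow> measure_pmf.prob (chain (k + m)) {x. (k, l) \<in> fst x} = pp k l"
    proof (induction m)
      case 0
      obtain i where i: "k = Suc i" using assms by (cases k) auto
      show ?case using prob_chain_new_interval[of i l] assms i by auto
    next
      case (Suc m)
      thus ?case using prob_chain_old_interval[of k "k + m" l] by auto
    qed
  qed
  from this[rule_format, of "n + 1 - k"] show ?thesis using assms by auto
qed

definition interval_pmf :: "(nat \<times> nat \<Rightarrow> nat) pmf" where
  "interval_pmf = map_pmf (\<lambda>x. (\<lambda>kl\<in>Pairs n. if kl \<in> fst x then 1 else 0)) (chain (n+1))"

lemma interval_pmf_marginal: "k \<in> {1..n} \<Longrightarrow> l \<in> {k..n+1} \<Longrightarrow> measure_pmf.prob interval_pmf {t. t (k, l) = 1} = pp k l"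
proof -
  assume kl: "k \<in> {1..n}" "l \<in> {k..n+1}"
  hence "(k, l) \<in> Pairs n" by (auto simp: Pairs_def)
  hence e: "(\<lambda>x. (\<lambda>kl\<in>Pairs n. if kl \<in> fst x then 1 else (0::nat))) -` {t. t (k, l) = 1} = {x. (k, l) \<in> fst x}"
    by auto
  have "measure_pmf.prob interval_pmf {t. t (k, l) = 1} = measure_pmf.prob (chain (n+1))
     ((\<lambda>x. (\<lambda>kl\<in>Pairs n. if kl \<in> fst x then 1 else (0::nat))) -` {t. t (k, l) = 1})"
    unfolding interval_pmf_def by (rule measure_map_pmf)
  thus ?thesis unfolding e using prob_chain_final_interval[OF kl] by simp
qed

lemma set_pmf_interval_pmf: "set_pmf interval_pmf \<subseteq> Tset n"
proof
  fix t assume "t \<in> set_pmf interval_pmf"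
  then obtain x where x: "x \<in> set_pmf (chain (n+1))" and t: "t = (\<lambda>kl\<in>Pairs n. if kl \<in> fst x then 1 else 0)"
    unfolding interval_pmf_def by auto
  have iv: "chain_inv (n+1) x" by (rule chain_inv_set_pmf[OF _ x]) simp
  hence cur: "snd x = n+1" unfolding chain_inv_def by auto
  have SP: "fst x \<subseteq> Pairs n" using iv cur unfolding chain_inv_def Pairs_def by auto
  have fin: "finite (fst x)" using iv unfolding chain_inv_def by auto
  show "t \<in> Tset n" unfolding Tset_def
  proof (intro CollectI conjI ballI)
    show "t \<in> Pi\<^sub>E (Pairs n) (\<lambda>_. {0, 1})" unfolding t by auto
  next
    fix m assume m: "m \<in> {1..n+1}"
    have "(\<Sum>k=1..m. \<Sum>l=m..n+1. t (k, l)) = (\<Sum>(k,l)\<in>{1..m} \<times> {m..n+1}. t (k, l))"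
      by (rule sum.cartesian_product)
    also have "\<dots> = (\<Sum>kl\<in>{1..m} \<times> {m..n+1}. t kl)" by simp
    also have "\<dots> = (\<Sum>kl\<in>{1..m} \<times> {m..n+1}. of_bool (kl \<in> fst x))"
      using m by (intro sum.cong) (auto simp: t Pairs_def)
    also have "\<dots> = card (({1..m} \<times> {m..n+1}) \<inter> {kl. kl \<in> fst x})" by simp
    also have "({1..m} \<times> {m..n+1}) \<inter> {kl. kl \<in> fst x} = {kl\<in>fst x. fst kl \<le> m \<and> m \<le> snd kl}"
      using SP by (auto simp: Pairs_def)
    also have "card \<dots> = 1" using iv cur m unfolding chain_inv_def by auto
    finally show "(\<Sum>k=1..m. \<Sum>l=m..n+1. t (k, l)) = 1" .
  qed
qed

end

lemma has_marginals_exists: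
  fixes p :: "nat \<Rightarrow> nat \<Rightarrow> nat \<Rightarrow> real"
  assumes "n \<ge> 1"
    and "\<forall>i\<in>{1..n}. (\<Sum>l=i..n+1. Psum p i l j) = 1"
    and "\<forall>k\<in>{1..n}. \<forall>l\<in>{k..n+1}. p k l j \<ge> 0"
  shows "\<exists>P. has_marginals n p j P"
proof -
  interpret cumulative_marginals n "\<lambda>k l. p k l j"
    using assms by unfold_locales (auto simp: Psum_def)
  show ?thesis unfolding has_marginals_def using set_pmf_interval_pmf interval_pmf_marginal by blast
qed

section \<open>The extremal distribution\<close>

text \<open>The identity need not be measurable into \<open>N\<close>; for the library facts about \<^const>\<open>distr\<close>
  it is exchanged for a measurable map that agrees with it on the support.\<close>
lemma distr_pmf_id_eq:
  assumes "set_pmf P \<subseteq> space N"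
  obtains g where "g \<in> measurable (measure_pmf P) N" "\<forall>x\<in>set_pmf P. g x = x"
    "distr (measure_pmf P) N (\<lambda>x. x) = distr (measure_pmf P) N g"
proof -
  obtain x0 where x0: "x0 \<in> set_pmf P" using set_pmf_not_empty[of P] by blast
  define g where "g x = (if x \<in> space N then x else x0)" for x
  have m: "g \<in> measurable (measure_pmf P) N" using x0 assms by (auto simp: g_def)
  have e: "\<forall>x\<in>set_pmf P. g x = x" using assms by (auto simp: g_def)
  have "distr (measure_pmf P) N (\<lambda>x. x) = distr (measure_pmf P) N g"
    unfolding distr_def
  proof (intro measure_of_eq sets.space_closed)
    fix a assume "a \<in> sigma_sets (space N) (sets N)"
    hence a: "a \<in> sets N" by (simp add: sets.sigma_sets_eq)
    show "emeasure (measure_pmf P) ((\<lambda>x. x) -` a \<inter> space (measure_pmf P)) =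
          emeasure (measure_pmf P) (g -` a \<inter> space (measure_pmf P))"
      by (intro emeasure_eq_AE) (auto simp: AE_measure_pmf_iff e)
  qed
  with m e that show ?thesis by blast
qed

lemma prob_space_distr_pmf_id: assumes "set_pmf P \<subseteq> space N" shows "prob_space (distr (measure_pmf P) N (\<lambda>x. x))"
proof -
  obtain g where g: "g \<in> measurable (measure_pmf P) N" "\<forall>x\<in>set_pmf P. g x = x"
    "distr (measure_pmf P) N (\<lambda>x. x) = distr (measure_pmf P) N g" using distr_pmf_id_eq[OF assms] by blast
  show ?thesis unfolding g(3) by (rule measure_pmf.prob_space_distr[OF g(1)])
qed

lemma emeasure_distr_pmf_id: assumes "set_pmf P \<subseteq> space N" "A \<in> sets N"
  shows "emeasure (distr (measure_pmf P) N (\<lambda>x. x)) A = emeasure (measure_pmf P) A"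
proof -
  obtain g where g: "g \<in> measurable (measure_pmf P) N" "\<forall>x\<in>set_pmf P. g x = x"
    "distr (measure_pmf P) N (\<lambda>x. x) = distr (measure_pmf P) N g" using distr_pmf_id_eq[OF assms(1)] by blast
  have "emeasure (distr (measure_pmf P) N g) A = emeasure (measure_pmf P) (g -` A \<inter> space (measure_pmf P))"
    by (rule emeasure_distr[OF g(1) assms(2)])
  also have "\<dots> = emeasure (measure_pmf P) A"
    by (intro emeasure_eq_AE) (auto simp: AE_measure_pmf_iff g(2))
  finally show ?thesis using g(3) by simp
qed

lemma integral_distr_pmf_id: assumes "set_pmf P \<subseteq> space N" "f \<in> borel_measurable N"
  shows "integral\<^sup>L (distr (measure_pmf P) N (\<lambda>x. x)) f = measure_pmf.expectation P (f :: _ \<Rightarrow> real)"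
proof -
  obtain g where g: "g \<in> measurable (measure_pmf P) N" "\<forall>x\<in>set_pmf P. g x = x"
    "distr (measure_pmf P) N (\<lambda>x. x) = distr (measure_pmf P) N g" using distr_pmf_id_eq[OF assms(1)] by blast
  have "integral\<^sup>L (distr (measure_pmf P) N g) f = measure_pmf.expectation P (\<lambda>x. f (g x))"
    by (rule integral_distr[OF g(1) assms(2)])
  also have "\<dots> = measure_pmf.expectation P f"
    by (intro integral_cong_AE) (auto simp: AE_measure_pmf_iff g(2))
  finally show ?thesis using g(3) by simp
qed

lemma nn_integral_distr_pmf_id: assumes "set_pmf P \<subseteq> space N" "f \<in> borel_measurable N"
  shows "nn_integral (distr (measure_pmf P) N (\<lambda>x. x)) f = nn_integral (measure_pmf P) f"
proof -
  obtain g where g: "g \<in> measurable (measure_pmf P) N" "\<forall>x\<in>set_pmf P. g x = x"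
    "distr (measure_pmf P) N (\<lambda>x. x) = distr (measure_pmf P) N g" using distr_pmf_id_eq[OF assms(1)] by blast
  have "nn_integral (distr (measure_pmf P) N g) f = (\<integral>\<^sup>+x. f (g x) \<partial>measure_pmf P)"
    by (rule nn_integral_distr[OF g(1)]) (use assms(2) in simp)
  also have "\<dots> = nn_integral (measure_pmf P) f"
    by (intro nn_integral_cong_AE) (auto simp: AE_measure_pmf_iff g(2))
  finally show ?thesis using g(3) by simp
qed

lemma distr_distr_pmf_id: assumes P: "set_pmf P \<subseteq> space N" and h: "h \<in> measurable N N'"
    and P': "set_pmf (map_pmf h P) \<subseteq> space N'"
  shows "distr (distr (measure_pmf P) N (\<lambda>x. x)) N' h = distr (measure_pmf (map_pmf h P)) N' (\<lambda>x. x)"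
proof (rule measure_eqI)
  show "sets (distr (distr (measure_pmf P) N (\<lambda>x. x)) N' h) = sets (distr (measure_pmf (map_pmf h P)) N' (\<lambda>x. x))"
    by (simp only: sets_distr)
  fix A assume "A \<in> sets (distr (distr (measure_pmf P) N (\<lambda>x. x)) N' h)"
  hence A: "A \<in> sets N'" by (simp only: sets_distr)
  have h': "h \<in> measurable (distr (measure_pmf P) N (\<lambda>x. x)) N'"
    using h by (simp only: measurable_cong_sets[OF sets_distr refl])
  have hA: "h -` A \<inter> space N \<in> sets N" by (rule measurable_sets[OF h A])
  have "emeasure (distr (distr (measure_pmf P) N (\<lambda>x. x)) N' h) A =
        emeasure (distr (measure_pmf P) N (\<lambda>x. x)) (h -` A \<inter> space (distr (measure_pmf P) N (\<lambda>x. x)))"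
    by (rule emeasure_distr[OF h' A])
  also have "\<dots> = emeasure (distr (measure_pmf P) N (\<lambda>x. x)) (h -` A \<inter> space N)"
    by (simp only: space_distr)
  also have "\<dots> = emeasure (measure_pmf P) (h -` A \<inter> space N)"
    by (rule emeasure_distr_pmf_id[OF P hA])
  also have "\<dots> = emeasure (measure_pmf P) (h -` A)"
  proof (rule emeasure_eq_AE)
    show "AE x in measure_pmf P. (x \<in> h -` A \<inter> space N) = (x \<in> h -` A)"
      unfolding AE_measure_pmf_iff using P by blast
  qed simp_all
  also have "\<dots> = emeasure (measure_pmf (map_pmf h P)) A" by (rule emeasure_map_pmf[symmetric])
  also have "\<dots> = emeasure (distr (measure_pmf (map_pmf h P)) N' (\<lambda>x. x)) A"
    by (rule emeasure_distr_pmf_id[OF P' A, symmetric])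
  finally show "emeasure (distr (distr (measure_pmf P) N (\<lambda>x. x)) N' h) A =
    emeasure (distr (measure_pmf (map_pmf h P)) N' (\<lambda>x. x)) A" .
qed

lemma expectation_cong_set_pmf:
  "(\<And>x. x \<in> set_pmf P \<Longrightarrow> f x = g x) \<Longrightarrow>
    measure_pmf.expectation P f = measure_pmf.expectation P (g :: _ \<Rightarrow> real)"
  by (intro integral_cong_AE) (auto simp: AE_measure_pmf_iff)

lemma expectation_mono_set_pmf:
  "finite (set_pmf P) \<Longrightarrow> (\<And>x. x \<in> set_pmf P \<Longrightarrow> f x \<le> g x) \<Longrightarrow>
    measure_pmf.expectation P f \<le> measure_pmf.expectation P (g :: _ \<Rightarrow> real)"
  by (intro integral_mono_AE integrable_measure_pmf_finite) (auto simp: AE_measure_pmf_iff)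

lemma expectation_uniform_mixture:
  assumes "N \<ge> 1" and "\<forall>j\<in>{1..N}. finite (set_pmf (P j))"
  shows "measure_pmf.expectation (bind_pmf (pmf_of_set {1..N}) (\<lambda>j. map_pmf (h j) (P j))) (F :: _ \<Rightarrow> real)
       = (\<Sum>j=1..N. measure_pmf.expectation (P j) (\<lambda>\<tau>. F (h j \<tau>))) / real N"
proof -
  have "measure_pmf.expectation (bind_pmf (pmf_of_set {1..N}) (\<lambda>j. map_pmf (h j) (P j))) F
      = (\<Sum>j\<in>{1..N}. measure_pmf.expectation (map_pmf (h j) (P j)) F /\<^sub>R real (card {1..N}))"
    using assms by (intro pmf_expectation_bind_pmf_of_set) auto
  also have "\<dots> = (\<Sum>j=1..N. measure_pmf.expectation (P j) (\<lambda>\<tau>. F (h j \<tau>)) / real N)"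
    by (simp add: divide_inverse mult.commute)
  finally show ?thesis by (simp add: sum_divide_distrib)
qed

lemma integral_triple_sum:
  fixes f :: "'j \<Rightarrow> 'i \<Rightarrow> 'l \<Rightarrow> 'a \<Rightarrow> real"
  assumes "\<And>j i l. j \<in> A \<Longrightarrow> i \<in> B \<Longrightarrow> l \<in> D i \<Longrightarrow> integrable M (f j i l)"
  shows "(\<Sum>j\<in>A. \<Sum>i\<in>B. \<Sum>l\<in>D i. integral\<^sup>L M (f j i l)) = (\<integral>x. (\<Sum>j\<in>A. \<Sum>i\<in>B. \<Sum>l\<in>D i. f j i l x) \<partial>M)"
    and "integrable M (\<lambda>x. \<Sum>j\<in>A. \<Sum>i\<in>B. \<Sum>l\<in>D i. f j i l x)"
proof -
  have int_l: "integrable M (\<lambda>x. \<Sum>l\<in>D i. f j i l x)" if "j \<in> A" "i \<in> B" for j i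
    using assms that by (intro Bochner_Integration.integrable_sum) auto
  have int_i: "integrable M (\<lambda>x. \<Sum>i\<in>B. \<Sum>l\<in>D i. f j i l x)" if "j \<in> A" for j
    by (rule Bochner_Integration.integrable_sum) (use int_l that in auto)
  show "integrable M (\<lambda>x. \<Sum>j\<in>A. \<Sum>i\<in>B. \<Sum>l\<in>D i. f j i l x)"
    by (rule Bochner_Integration.integrable_sum) (use int_i in auto)
  have "(\<Sum>j\<in>A. \<Sum>i\<in>B. \<Sum>l\<in>D i. integral\<^sup>L M (f j i l)) = (\<Sum>j\<in>A. \<Sum>i\<in>B. \<integral>x. (\<Sum>l\<in>D i. f j i l x) \<partial>M)"
    using assms by (intro sum.cong refl Bochner_Integration.integral_sum[symmetric]) auto
  also have "\<dots> = (\<Sum>j\<in>A. \<integral>x. (\<Sum>i\<in>B. \<Sum>l\<in>D i. f j i l x) \<partial>M)"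
    using assms int_l by (intro sum.cong refl Bochner_Integration.integral_sum[symmetric]) auto
  also have "\<dots> = (\<integral>x. (\<Sum>j\<in>A. \<Sum>i\<in>B. \<Sum>l\<in>D i. f j i l x) \<partial>M)"
    using assms int_l int_i by (intro Bochner_Integration.integral_sum[symmetric]) auto
  finally show "(\<Sum>j\<in>A. \<Sum>i\<in>B. \<Sum>l\<in>D i. integral\<^sup>L M (f j i l)) = (\<integral>x. (\<Sum>j\<in>A. \<Sum>i\<in>B. \<Sum>l\<in>D i. f j i l x) \<partial>M)" .
qed

lemma abs_le_sum_sum_abs:
  fixes f :: "'i \<Rightarrow> 'l \<Rightarrow> real"
  assumes "finite A" "\<And>i. i \<in> A \<Longrightarrow> finite (B i)" "i \<in> A" "l \<in> B i"
  shows "\<bar>f i l\<bar> \<le> (\<Sum>i\<in>A. \<Sum>l\<in>B i. \<bar>f i l\<bar>)"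
proof -
  have "\<bar>f i l\<bar> \<le> (\<Sum>l\<in>B i. \<bar>f i l\<bar>)" using assms by (intro member_le_sum) auto
  also have "\<dots> \<le> (\<Sum>i\<in>A. \<Sum>l\<in>B i. \<bar>f i l\<bar>)"
    using assms by (intro member_le_sum[where f = "\<lambda>i. \<Sum>l\<in>B i. \<bar>f i l\<bar>"] sum_nonneg) auto
  finally show ?thesis .
qed

lemma finite_set_pmf_has_marginals: "has_marginals n p j P \<Longrightarrow> finite (set_pmf P)"
  unfolding has_marginals_def using finite_Tset finite_subset by blast

lemma expectation_cover_count:
  assumes P: "has_marginals n p j P" and i: "i \<in> {1..n}" and l: "l \<in> {i..n+1}"
  shows "measure_pmf.expectation P (\<lambda>\<tau>. cover_count \<tau> i l) = Psum p i l j"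
proof -
  have "measure_pmf.expectation P (\<lambda>\<tau>. real (\<tau> (k, l))) = p k l j" if k: "k \<in> {1..i}" for k
  proof -
    have "measure_pmf.expectation P (\<lambda>\<tau>. real (\<tau> (k, l)))
        = measure_pmf.expectation P (indicator {\<tau>. \<tau> (k, l) = 1})"
    proof (rule expectation_cong_set_pmf)
      fix \<tau> assume "\<tau> \<in> set_pmf P"
      then have "\<tau> (k, l) = 0 \<or> \<tau> (k, l) = 1"
        using P k l i Tset_zero_or_one[of \<tau> n k l] unfolding has_marginals_def by auto
      then show "real (\<tau> (k, l)) = indicator {\<tau>. \<tau> (k, l) = 1} \<tau>" by auto
    qed
    also have "\<dots> = p k l j" using P k l i unfolding has_marginals_def by simp
    finally show ?thesis .
  qed
  then show ?thesis
    unfolding cover_count_def Psum_def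
    by (subst Bochner_Integration.integral_sum)
      (auto intro: integrable_measure_pmf_finite[OF finite_set_pmf_has_marginals[OF P]])
qed

lemma expectation_cover_sum:
  assumes "has_marginals n p j P"
  shows "measure_pmf.expectation P (\<lambda>\<tau>. \<Sum>i=1..n. \<Sum>l=i..n+1. cover_count \<tau> i l * G i l)
       = (\<Sum>i=1..n. \<Sum>l=i..n+1. Psum p i l j * G i l)"
  using assms expectation_cover_count[OF assms]
  by (simp add: Bochner_Integration.integral_sum integrable_measure_pmf_finite finite_set_pmf_has_marginals)

lemma LP_feasible_bounds:
  assumes "LP_feasible n N uL uU uh eps p q r" "i \<in> {1..n}" "l \<in> {i..n+1}" "j \<in> {1..N}"
  shows "0 \<le> p i l j \<and> 0 \<le> q i l j \<and> 0 \<le> r i l j \<and> q i l j + r i l j \<le> Psum p i l j"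
proof -
  have "0 \<le> Psum p i l j - q i l j - r i l j" "0 \<le> p i l j \<and> 0 \<le> q i l j \<and> 0 \<le> r i l j"
    using assms unfolding LP_feasible_def by blast+
  then show ?thesis by linarith
qed

lemma Psum_le_1:
  assumes f: "LP_feasible n N uL uU uh eps p q r" and i: "i \<in> {1..n}" and l: "l \<in> {i..n+1}"
    and j: "j \<in> {1..N}"
  shows "Psum p i l j \<le> 1"
proof -
  have "Psum p i l j \<le> (\<Sum>l'=i..n+1. Psum p i l' j)"
    using LP_feasible_bounds[OF f i _ j] l by (intro member_le_sum) force+
  then show ?thesis using f i j unfolding LP_feasible_def by simp
qed

lemma LP_obj_term_le:
  fixes \<pi> a b e q r P :: real
  assumes "0 \<le> q" "0 \<le> r" "q + r \<le> P" "P \<le> 1"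
  shows "\<pi> * (a * q + b * r + P * e) \<le> \<bar>\<pi>\<bar> * (\<bar>a\<bar> + \<bar>b\<bar> + \<bar>e\<bar>)"
proof -
  have "\<bar>a * q\<bar> \<le> \<bar>a\<bar>" "\<bar>b * r\<bar> \<le> \<bar>b\<bar>" "\<bar>P * e\<bar> \<le> \<bar>e\<bar>"
    using assms by (auto simp: abs_mult intro: mult_left_le mult_left_le_one_le)
  then have "\<bar>a * q + b * r + P * e\<bar> \<le> \<bar>a\<bar> + \<bar>b\<bar> + \<bar>e\<bar>" by linarith
  then have "\<bar>\<pi>\<bar> * \<bar>a * q + b * r + P * e\<bar> \<le> \<bar>\<pi>\<bar> * (\<bar>a\<bar> + \<bar>b\<bar> + \<bar>e\<bar>)"
    by (rule mult_left_mono) simp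
  then show ?thesis by (metis abs_ge_self abs_mult order_trans)
qed

lemma bdd_above_LP_values:
  "bdd_above {LP_obj n N c d C uL uU uh s p q r | p q r. LP_feasible n N uL uU uh eps p q r}"
proof (rule bdd_aboveI)
  fix x assume "x \<in> {LP_obj n N c d C uL uU uh s p q r | p q r. LP_feasible n N uL uU uh eps p q r}"
  then obtain p q r where x: "x = LP_obj n N c d C uL uU uh s p q r"
    and f: "LP_feasible n N uL uU uh eps p q r" by blast
  show "x \<le> (1 / real N) * (\<Sum>j=1..N. \<Sum>i=1..n. \<Sum>l=i..n+1.
      \<bar>pic n c d C i l\<bar> * (\<bar>uL i - uh j i\<bar> + \<bar>uU i - uh j i\<bar> + \<bar>uh j i - s i\<bar>))"
    unfolding x LP_obj_def
    using LP_feasible_bounds[OF f] Psum_le_1[OF f]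
    by (intro mult_left_mono sum_mono LP_obj_term_le) auto
qed

text \<open>With \<open>P = Psum p i l j\<close>, the point \<open>ustar\<close> is the convex combination of \<open>uh j i\<close>, \<open>uL i\<close>
  and \<open>uU i\<close> with weights \<open>(P - q - r) / P\<close>, \<open>q / P\<close> and \<open>r / P\<close>; if \<open>P = 0\<close> then \<open>q = r = 0\<close>.\<close>
lemma Psum_mult_ustar:
  assumes "0 \<le> q i l j" "0 \<le> r i l j" "q i l j + r i l j \<le> Psum p i l j"
  shows "Psum p i l j * (ustar uL uU uh p q r i l j - s) =
     (uL i - uh j i) * q i l j + (uU i - uh j i) * r i l j + Psum p i l j * (uh j i - s)"
proof (cases "Psum p i l j = 0")
  case True
  then have "q i l j = 0" "r i l j = 0" using assms by auto
  then show ?thesis using True by (simp add: ustar_def)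
qed (simp add: ustar_def field_simps)

lemma ustar_in_box:
  assumes q: "0 \<le> q i l j" and r: "0 \<le> r i l j" and P: "q i l j + r i l j \<le> Psum p i l j"
    and u: "uL i \<le> uh j i" "uh j i \<le> uU i"
  shows "ustar uL uU uh p q r i l j \<in> {uL i..uU i}"
proof (cases "Psum p i l j = 0")
  case True
  then show ?thesis using q r P u by (simp add: ustar_def)
next
  case False
  let ?P = "Psum p i l j"
  have Pp: "?P > 0" using False q r P by auto
  have "ustar uL uU uh p q r i l j - uL i = ((?P - q i l j) * (uh j i - uL i) + r i l j * (uU i - uh j i)) / ?P"
    and "uU i - ustar uL uU uh p q r i l j = ((?P - r i l j) * (uU i - uh j i) + q i l j * (uh j i - uL i)) / ?P"
    using Pp by (simp_all add: ustar_def field_simps)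
  moreover have "0 \<le> ((?P - q i l j) * (uh j i - uL i) + r i l j * (uU i - uh j i)) / ?P"
    and "0 \<le> ((?P - r i l j) * (uU i - uh j i) + q i l j * (uh j i - uL i)) / ?P"
    using Pp q r P u by (auto intro!: divide_nonneg_pos add_nonneg_nonneg mult_nonneg_nonneg)
  ultimately show ?thesis by simp
qed

lemma Psum_mult_ustar_dist:
  assumes q: "0 \<le> q i l j" and r: "0 \<le> r i l j" and P: "q i l j + r i l j \<le> Psum p i l j"
    and u: "uL i \<le> uh j i" "uh j i \<le> uU i"
  shows "Psum p i l j * \<bar>ustar uL uU uh p q r i l j - uh j i\<bar> \<le>
     (uh j i - uL i) * q i l j + (uU i - uh j i) * r i l j"
proof -
  have "Psum p i l j * \<bar>ustar uL uU uh p q r i l j - uh j i\<bar>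
      = \<bar>Psum p i l j * (ustar uL uU uh p q r i l j - uh j i)\<bar>"
    using q r P by (simp add: abs_mult)
  also have "\<dots> = \<bar>(uL i - uh j i) * q i l j + (uU i - uh j i) * r i l j\<bar>"
    using Psum_mult_ustar[where s = "uh j i" and uL = uL and uU = uU and uh = uh and p = p and q = q
        and r = r and i = i and l = l and j = j, OF q r P] by simp
  also have "\<dots> \<le> (uh j i - uL i) * q i l j + (uU i - uh j i) * r i l j"
    using mult_left_mono[OF u(1) q] mult_left_mono[OF u(2) r] by (simp add: abs_le_iff algebra_simps)
  finally show ?thesis .
qed

definition Qstar_pmf :: "nat \<Rightarrow> nat \<Rightarrow> (nat \<Rightarrow> real) \<Rightarrow> (nat \<Rightarrow> real) \<Rightarrow> (nat \<Rightarrow> nat \<Rightarrow> real)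
    \<Rightarrow> (nat \<Rightarrow> nat \<Rightarrow> nat \<Rightarrow> real) \<Rightarrow> (nat \<Rightarrow> nat \<Rightarrow> nat \<Rightarrow> real)
    \<Rightarrow> (nat \<Rightarrow> nat \<Rightarrow> nat \<Rightarrow> real) \<Rightarrow> (nat \<Rightarrow> (nat \<times> nat \<Rightarrow> nat) pmf) \<Rightarrow> (nat \<Rightarrow> real) pmf" where
  "Qstar_pmf n N uL uU uh p q r Pt =
     bind_pmf (pmf_of_set {1..N}) (\<lambda>j. map_pmf (uvec n uL uU uh p q r j) (Pt j))"

lemma Qstar_eq_distr_Qstar_pmf:
  "Qstar n N uL uU uh p q r Pt = distr (measure_pmf (Qstar_pmf n N uL uU uh p q r Pt)) (Mn n) (\<lambda>x. x)"
  by (simp add: Qstar_def Qstar_pmf_def)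

definition Qstar_coupling_pmf :: "nat \<Rightarrow> nat \<Rightarrow> (nat \<Rightarrow> real) \<Rightarrow> (nat \<Rightarrow> real) \<Rightarrow> (nat \<Rightarrow> nat \<Rightarrow> real)
    \<Rightarrow> (nat \<Rightarrow> nat \<Rightarrow> nat \<Rightarrow> real) \<Rightarrow> (nat \<Rightarrow> nat \<Rightarrow> nat \<Rightarrow> real) \<Rightarrow> (nat \<Rightarrow> nat \<Rightarrow> nat \<Rightarrow> real)
    \<Rightarrow> (nat \<Rightarrow> (nat \<times> nat \<Rightarrow> nat) pmf) \<Rightarrow> ((nat \<Rightarrow> real) \<times> (nat \<Rightarrow> real)) pmf" where
  "Qstar_coupling_pmf n N uL uU uh p q r Pt = bind_pmf (pmf_of_set {1..N})
     (\<lambda>j. map_pmf (\<lambda>\<tau>. (uvec n uL uU uh p q r j \<tau>, restrict (uh j) {1..n})) (Pt j))"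

locale dro_data = second_stage n c d C
  for n :: nat and c d :: "nat \<Rightarrow> real" and C :: real +
  fixes N :: nat and uL uU :: "nat \<Rightarrow> real" and uh :: "nat \<Rightarrow> nat \<Rightarrow> real"
  assumes N_pos: "N \<ge> 1"
    and samples_in_box: "\<forall>j\<in>{1..N}. \<forall>i\<in>{1..n}. uL i \<le> uh j i \<and> uh j i \<le> uU i"

locale Qstar_data = dro_data n c d C N uL uU uh
  for n c d C N uL uU uh +
  fixes eps :: real and p q r :: "nat \<Rightarrow> nat \<Rightarrow> nat \<Rightarrow> real"
    and Pt :: "nat \<Rightarrow> (nat \<times> nat \<Rightarrow> nat) pmf"
  assumes feasible: "LP_feasible n N uL uU uh eps p q r"
    and marginals: "\<forall>j\<in>{1..N}. has_marginals n p j (Pt j)"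
begin

abbreviation "U \<equiv> uvec n uL uU uh p q r"
abbreviation "QP \<equiv> Qstar_pmf n N uL uU uh p q r Pt"
abbreviation "WP \<equiv> Qstar_coupling_pmf n N uL uU uh p q r Pt"

lemma finite_set_pmf_Pt: "\<forall>j\<in>{1..N}. finite (set_pmf (Pt j))"
  using marginals finite_set_pmf_has_marginals by blast

lemma set_pmf_Pt: "j \<in> {1..N} \<Longrightarrow> \<tau> \<in> set_pmf (Pt j) \<Longrightarrow> \<tau> \<in> Tset n"
  using marginals unfolding has_marginals_def by blast

lemma uvec_in_Uset:
  assumes j: "j \<in> {1..N}" and t: "\<tau> \<in> Tset n"
  shows "U j \<tau> \<in> Uset n uL uU"
  unfolding Uset_def PiE_iff
proof (intro conjI ballI)
  fix i assume i: "i \<in> {1..n}"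
  have "i \<in> {1..n+1}" using i by simp
  then have l: "covering_end n \<tau> i \<in> {i..n+1}" using Tset_covering_pair[OF t] by blast
  show "U j \<tau> i \<in> {uL i..uU i}"
    unfolding uvec_covering_end[OF t i]
    using LP_feasible_bounds[OF feasible i l j] samples_in_box i j by (intro ustar_in_box) auto
qed (simp add: uvec_def)

lemma set_pmf_Qstar_pmf: "set_pmf QP \<subseteq> Uset n uL uU"
  using N_pos uvec_in_Uset set_pmf_Pt by (auto simp: Qstar_pmf_def)

lemma set_pmf_Qstar_pmf_space: "set_pmf QP \<subseteq> space (Mn n)"
  using set_pmf_Qstar_pmf Uset_subset_space by blast

lemma LP_obj_le_integral_Qstar:
  "LP_obj n N c d C uL uU uh s p q r \<le> (\<integral>u. fval n c d C s u \<partial>Qstar n N uL uU uh p q r Pt)"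
proof -
  define K where "K i l j = pic n c d C i l * (ustar uL uU uh p q r i l j - s i)" for i l j
  have pointwise: "(\<Sum>i=1..n. \<Sum>l=i..n+1. cover_count \<tau> i l * K i l j) \<le> fval n c d C s (U j \<tau>)"
    if j: "j \<in> {1..N}" and t: "\<tau> \<in> Tset n" for j \<tau>
  proof -
    have "(\<Sum>i=1..n. \<Sum>l=i..n+1. cover_count \<tau> i l * K i l j) = (\<Sum>i=1..n. K i (covering_end n \<tau> i) j)"
      by (intro sum.cong refl sum_cover_count_mult[OF t]) auto
    also have "\<dots> = (\<Sum>i=1..n. pic n c d C i (covering_end n \<tau> i) * (U j \<tau> i - s i))"
      by (intro sum.cong refl) (simp add: K_def uvec_covering_end[OF t])
    also have "\<dots> \<le> fval n c d C s (U j \<tau>)"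
      by (rule admissible_sum_le_fval[OF admissible_ends_covering_end[OF t]])
    finally show ?thesis .
  qed
  have K_eq: "Psum p i l j * K i l j = pic n c d C i l *
      ((uL i - uh j i) * q i l j + (uU i - uh j i) * r i l j + Psum p i l j * (uh j i - s i))"
    if "j \<in> {1..N}" "i \<in> {1..n}" "l \<in> {i..n+1}" for i l j
    using Psum_mult_ustar[where s = "s i" and uL = uL and uU = uU and uh = uh and p = p and q = q
        and r = r and i = i and l = l and j = j] LP_feasible_bounds[OF feasible that(2,3,1)]
    unfolding K_def by (simp add: mult.left_commute)
  have "LP_obj n N c d C uL uU uh s p q r = (\<Sum>j=1..N. \<Sum>i=1..n. \<Sum>l=i..n+1. Psum p i l j * K i l j) / real N"
    unfolding LP_obj_def by (simp add: K_eq)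
  also have "\<dots> = (\<Sum>j=1..N. measure_pmf.expectation (Pt j)
      (\<lambda>\<tau>. \<Sum>i=1..n. \<Sum>l=i..n+1. cover_count \<tau> i l * K i l j)) / real N"
    using marginals
    by (intro arg_cong[where f = "\<lambda>x. x / real N"] sum.cong refl expectation_cover_sum[symmetric]) auto
  also have "\<dots> \<le> (\<Sum>j=1..N. measure_pmf.expectation (Pt j) (\<lambda>\<tau>. fval n c d C s (U j \<tau>))) / real N"
    using finite_set_pmf_Pt pointwise set_pmf_Pt
    by (intro divide_right_mono sum_mono expectation_mono_set_pmf) auto
  also have "\<dots> = measure_pmf.expectation QP (fval n c d C s)"
    unfolding Qstar_pmf_def by (rule expectation_uniform_mixture[OF N_pos finite_set_pmf_Pt, symmetric])
  also have "\<dots> = (\<integral>u. fval n c d C s u \<partial>Qstar n N uL uU uh p q r Pt)"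
    unfolding Qstar_eq_distr_Qstar_pmf
    by (rule integral_distr_pmf_id[OF set_pmf_Qstar_pmf_space fval_measurable, symmetric])
  finally show ?thesis .
qed

lemma set_pmf_Qstar_coupling_pmf:
  "set_pmf WP = (\<Union>j\<in>{1..N}. (\<lambda>\<tau>. (U j \<tau>, restrict (uh j) {1..n})) ` set_pmf (Pt j))"
  using N_pos by (simp add: Qstar_coupling_pmf_def)

lemma set_pmf_Qstar_coupling_pmf_space: "set_pmf WP \<subseteq> space (Mn n \<Otimes>\<^sub>M Mn n)"
  unfolding set_pmf_Qstar_coupling_pmf space_pair_measure
  using set_pmf_Qstar_pmf_space N_pos by (auto simp: Qstar_pmf_def space_Mn)

lemma Qstar_coupling:
  "coupling n (Qstar n N uL uU uh p q r Pt) (empirical n N uh)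
     (distr (measure_pmf WP) (Mn n \<Otimes>\<^sub>M Mn n) (\<lambda>x. x))"
  unfolding coupling_def
proof (intro conjI)
  have sp: "set_pmf (map_pmf fst WP) \<subseteq> space (Mn n)" "set_pmf (map_pmf snd WP) \<subseteq> space (Mn n)"
    using set_pmf_Qstar_coupling_pmf_space by (auto simp: space_pair_measure)
  have "map_pmf fst WP = QP"
    by (simp add: Qstar_coupling_pmf_def Qstar_pmf_def map_bind_pmf map_pmf_comp)
  then show "distr (distr (measure_pmf WP) (Mn n \<Otimes>\<^sub>M Mn n) (\<lambda>x. x)) (Mn n) fst = Qstar n N uL uU uh p q r Pt"
    unfolding Qstar_eq_distr_Qstar_pmf
    using distr_distr_pmf_id[OF set_pmf_Qstar_coupling_pmf_space measurable_fst sp(1)] by simp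
  have "map_pmf snd WP = bind_pmf (pmf_of_set {1..N}) (\<lambda>j. return_pmf (restrict (uh j) {1..n}))"
    by (simp add: Qstar_coupling_pmf_def map_bind_pmf map_pmf_comp)
  also have "\<dots> = map_pmf (\<lambda>j. restrict (uh j) {1..n}) (pmf_of_set {1..N})"
    by (simp add: map_pmf_def)
  finally have "map_pmf snd WP = map_pmf (\<lambda>j. restrict (uh j) {1..n}) (pmf_of_set {1..N})" .
  then show "distr (distr (measure_pmf WP) (Mn n \<Otimes>\<^sub>M Mn n) (\<lambda>x. x)) (Mn n) snd = empirical n N uh"
    unfolding empirical_def
    using distr_distr_pmf_id[OF set_pmf_Qstar_coupling_pmf_space measurable_snd sp(2)] by simp
qed (use prob_space_distr_pmf_id[OF set_pmf_Qstar_coupling_pmf_space] in simp_all)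

lemma expectation_l1_dist_Qstar_coupling:
  "measure_pmf.expectation WP (\<lambda>x. \<Sum>i=1..n. \<bar>fst x i - snd x i\<bar>) \<le> eps"
proof -
  let ?D = "\<lambda>i l j. \<bar>ustar uL uU uh p q r i l j - uh j i\<bar>"
  have pointwise: "(\<Sum>i=1..n. \<bar>U j \<tau> i - restrict (uh j) {1..n} i\<bar>)
      = (\<Sum>i=1..n. \<Sum>l=i..n+1. cover_count \<tau> i l * ?D i l j)"
    if "j \<in> {1..N}" "\<tau> \<in> set_pmf (Pt j)" for j \<tau>
  proof -
    have t: "\<tau> \<in> Tset n" using set_pmf_Pt that by blast
    have "(\<Sum>i=1..n. \<bar>U j \<tau> i - restrict (uh j) {1..n} i\<bar>) = (\<Sum>i=1..n. ?D i (covering_end n \<tau> i) j)"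
      by (intro sum.cong refl) (simp add: uvec_covering_end[OF t])
    also have "\<dots> = (\<Sum>i=1..n. \<Sum>l=i..n+1. cover_count \<tau> i l * ?D i l j)"
      by (intro sum.cong refl sum_cover_count_mult[OF t, symmetric]) auto
    finally show ?thesis .
  qed
  have "measure_pmf.expectation WP (\<lambda>x. \<Sum>i=1..n. \<bar>fst x i - snd x i\<bar>)
      = (\<Sum>j=1..N. measure_pmf.expectation (Pt j)
          (\<lambda>\<tau>. \<Sum>i=1..n. \<bar>U j \<tau> i - restrict (uh j) {1..n} i\<bar>)) / real N"
    unfolding Qstar_coupling_pmf_def by (subst expectation_uniform_mixture[OF N_pos finite_set_pmf_Pt]) simp
  also have "\<dots> = (\<Sum>j=1..N. \<Sum>i=1..n. \<Sum>l=i..n+1. Psum p i l j * ?D i l j) / real N"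
  proof (intro arg_cong[where f = "\<lambda>x. x / real N"] sum.cong refl)
    fix j assume j: "j \<in> {1..N}"
    have "measure_pmf.expectation (Pt j) (\<lambda>\<tau>. \<Sum>i=1..n. \<bar>U j \<tau> i - restrict (uh j) {1..n} i\<bar>)
        = measure_pmf.expectation (Pt j) (\<lambda>\<tau>. \<Sum>i=1..n. \<Sum>l=i..n+1. cover_count \<tau> i l * ?D i l j)"
      by (rule expectation_cong_set_pmf) (rule pointwise[OF j])
    also have "\<dots> = (\<Sum>i=1..n. \<Sum>l=i..n+1. Psum p i l j * ?D i l j)"
      using marginals j by (intro expectation_cover_sum) auto
    finally show "measure_pmf.expectation (Pt j) (\<lambda>\<tau>. \<Sum>i=1..n. \<bar>U j \<tau> i - restrict (uh j) {1..n} i\<bar>)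
        = (\<Sum>i=1..n. \<Sum>l=i..n+1. Psum p i l j * ?D i l j)" .
  qed
  also have "\<dots> \<le> (\<Sum>j=1..N. \<Sum>i=1..n. \<Sum>l=i..n+1.
      (uh j i - uL i) * q i l j + (uU i - uh j i) * r i l j) / real N"
  proof (intro divide_right_mono sum_mono)
    fix j i l assume j: "j \<in> {1..N}" and i: "i \<in> {1..n}" and l: "l \<in> {i..n+1}"
    show "Psum p i l j * ?D i l j \<le> (uh j i - uL i) * q i l j + (uU i - uh j i) * r i l j"
      using LP_feasible_bounds[OF feasible i l j] samples_in_box i j
      by (intro Psum_mult_ustar_dist) auto
  qed simp
  also have "\<dots> \<le> eps" using feasible unfolding LP_feasible_def by simp
  finally show ?thesis .
qed

lemma wass1_Qstar_le: "wass1 n (Qstar n N uL uU uh p q r Pt) (empirical n N uh) \<le> ennreal eps"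
proof -
  have "wass1 n (Qstar n N uL uU uh p q r Pt) (empirical n N uh)
      \<le> (\<integral>\<^sup>+x. ennreal (\<Sum>i=1..n. \<bar>fst x i - snd x i\<bar>) \<partial>distr (measure_pmf WP) (Mn n \<Otimes>\<^sub>M Mn n) (\<lambda>x. x))"
    unfolding wass1_def by (rule INF_lower) (use Qstar_coupling in simp)
  also have "\<dots> = (\<integral>\<^sup>+x. ennreal (\<Sum>i=1..n. \<bar>fst x i - snd x i\<bar>) \<partial>measure_pmf WP)"
    by (rule nn_integral_distr_pmf_id[OF set_pmf_Qstar_coupling_pmf_space]) (use l1_dist_measurable in measurable)
  also have "\<dots> = ennreal (measure_pmf.expectation WP (\<lambda>x. \<Sum>i=1..n. \<bar>fst x i - snd x i\<bar>))"
    using finite_set_pmf_Pt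
    by (intro nn_integral_eq_integral integrable_measure_pmf_finite)
      (auto simp: set_pmf_Qstar_coupling_pmf)
  also have "\<dots> \<le> ennreal eps" by (rule ennreal_leI[OF expectation_l1_dist_Qstar_coupling])
  finally show ?thesis .
qed

lemma Qstar_in_Dball: "Qstar n N uL uU uh p q r Pt \<in> Dball n uL uU N uh eps"
proof -
  have "emeasure (Qstar n N uL uU uh p q r Pt) (Uset n uL uU) = emeasure (measure_pmf QP) (Uset n uL uU)"
    unfolding Qstar_eq_distr_Qstar_pmf by (rule emeasure_distr_pmf_id[OF set_pmf_Qstar_pmf_space Uset_sets])
  also have "\<dots> = 1"
    using set_pmf_Qstar_pmf by (intro measure_pmf.emeasure_eq_1_AE) (auto simp: AE_measure_pmf_iff)
  finally show ?thesis
    unfolding Dball_def using wass1_Qstar_le prob_space_distr_pmf_id[OF set_pmf_Qstar_pmf_space]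
    by (simp add: Qstar_eq_distr_Qstar_pmf)
qed

end

section \<open>Upper bound through couplings\<close>

lemma clearing_stage_telescope:
  assumes "1 \<le> i" "i \<le> l" "l \<le> n+1"
  shows "(\<Sum>k=1..i. of_bool (clearing_stage n s u k = l \<and> clearing_stage n s u (k-1) \<noteq> l) :: real) = of_bool (clearing_stage n s u i = l)"
  using assms
proof (induction i)
  case 0 thus ?case by simp
next
  case (Suc i)
  show ?case
  proof (cases "i = 0")
    case True thus ?thesis using Suc.prems clearing_stage_0[of n s u] by simp
  next
    case False
    have IH: "(\<Sum>k=1..i. of_bool (clearing_stage n s u k = l \<and> clearing_stage n s u (k-1) \<noteq> l) :: real) = of_bool (clearing_stage n s u i = l)"
      using Suc False by simp
    have imp: "clearing_stage n s u i = l \<Longrightarrow> clearing_stage n s u (Suc i) = l" using clearing_stage_Suc_if_passed[of i n l s u] Suc.prems by simp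
    have "(\<Sum>k=1..Suc i. of_bool (clearing_stage n s u k = l \<and> clearing_stage n s u (k-1) \<noteq> l) :: real) =
        of_bool (clearing_stage n s u i = l) + of_bool (clearing_stage n s u (Suc i) = l \<and> clearing_stage n s u i \<noteq> l)"
      using IH by simp
    also have "\<dots> = of_bool (clearing_stage n s u (Suc i) = l)" using imp by auto
    finally show ?thesis .
  qed
qed

lemma sum_of_bool_clearing_stage:
  assumes "i \<in> {1..n}"
  shows "(\<Sum>l=i..n+1. of_bool (clearing_stage n s u i = l) * F l) = (F (clearing_stage n s u i) :: real)"
proof -
  have r: "clearing_stage n s u i \<in> {i..n+1}" using clearing_stage_bounds[of i n s u] assms by auto
  have "(\<Sum>l=i..n+1. of_bool (clearing_stage n s u i = l) * F l) = (\<Sum>l=i..n+1. if l = clearing_stage n s u i then F l else 0)"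
    by (intro sum.cong) auto
  also have "\<dots> = F (clearing_stage n s u i)" using r by simp
  finally show ?thesis .
qed

locale empirical_coupling = dro_data n c d C N uL uU uh
  for n c d C N uL uU uh +
  fixes s :: "nat \<Rightarrow> real" and Q :: "(nat \<Rightarrow> real) measure"
    and W :: "((nat \<Rightarrow> real) \<times> (nat \<Rightarrow> real)) measure"
  assumes coupling: "coupling n Q (empirical n N uh) W"
    and Q_Uset: "emeasure Q (Uset n uL uU) = 1"
begin

sublocale W: prob_space W
  using coupling unfolding coupling_def by blast

lemma sets_W: "sets W = sets (Mn n \<Otimes>\<^sub>M Mn n)"
  using coupling unfolding coupling_def by blast

lemma measurable_W: "measurable W M = measurable (Mn n \<Otimes>\<^sub>M Mn n) M"
  by (rule measurable_cong_sets[OF sets_W refl])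

lemma measurable_fst_W: "fst \<in> measurable W (Mn n)" and measurable_snd_W: "snd \<in> measurable W (Mn n)"
  by (simp_all add: measurable_W)

lemma integral_fval_fst:
  "(\<integral>u. fval n c d C s u \<partial>Q) = (\<integral>x. fval n c d C s (fst x) \<partial>W)"
  using coupling integral_distr[OF measurable_fst_W fval_measurable]
  unfolding coupling_def by simp

definition sample :: "nat \<Rightarrow> nat \<Rightarrow> real" where "sample j = restrict (uh j) {1..n}"
definition multiplicity :: "nat \<Rightarrow> nat" where "multiplicity j = card {j'\<in>{1..N}. sample j' = sample j}"
definition sample_set :: "nat \<Rightarrow> ((nat \<Rightarrow> real) \<times> (nat \<Rightarrow> real)) set" where "sample_set j = {x\<in>space W. snd x = sample j}"
text \<open>\<open>sample_weight j\<close> shares the mass of an atom of the empirical distribution equally among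
  the samples at that atom, so that \<open>\<Sum>j. sample_weight j = 1\<close> a.e. and each has integral \<open>1/N\<close>.\<close>
definition sample_weight :: "nat \<Rightarrow> (nat \<Rightarrow> real) \<times> (nat \<Rightarrow> real) \<Rightarrow> real" where
  "sample_weight j x = indicator (sample_set j) x / real (multiplicity j)"
definition clearing_fst :: "(nat \<Rightarrow> real) \<times> (nat \<Rightarrow> real) \<Rightarrow> nat \<Rightarrow> nat" where "clearing_fst x i = clearing_stage n s (fst x) i"

lemma fst_component_measurable: "i \<in> {1..n} \<Longrightarrow> (\<lambda>x. fst x i) \<in> borel_measurable W"
  unfolding measurable_W by (rule pair_component_measurable_Mn(1))

lemma snd_component_measurable: "i \<in> {1..n} \<Longrightarrow> (\<lambda>x. snd x i) \<in> borel_measurable W"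
  unfolding measurable_W by (rule pair_component_measurable_Mn(2))

lemma clearing_fst_measurable: "(\<lambda>x. clearing_fst x i) \<in> measurable W (count_space UNIV)"
  unfolding measurable_W clearing_fst_def by (rule measurable_compose[OF measurable_fst clearing_stage_measurable])

lemma clearing_fst_fun_measurable: "(\<lambda>x. (g (clearing_fst x i) :: real)) \<in> borel_measurable W"
  by (rule measurable_compose[OF clearing_fst_measurable]) simp

lemma clearing_fst_fun2_measurable: "(\<lambda>x. (g (clearing_fst x i) (clearing_fst x k) :: real)) \<in> borel_measurable W"
proof -
  have "(\<lambda>x. (clearing_fst x i, clearing_fst x k)) \<in> measurable W (count_space UNIV \<Otimes>\<^sub>M count_space UNIV)"
    using clearing_fst_measurable by (intro measurable_Pair) auto
  moreover have "(\<lambda>(a, b). g a b) \<in> borel_measurable (count_space UNIV \<Otimes>\<^sub>M (count_space UNIV :: nat measure))"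
    by (simp add: pair_measure_countable)
  ultimately have "(\<lambda>x. (\<lambda>(a, b). g a b) (clearing_fst x i, clearing_fst x k)) \<in> borel_measurable W"
    by (rule measurable_compose)
  thus ?thesis by simp
qed

lemma sample_in_space: "sample j \<in> space (Mn n)"
  by (simp add: sample_def space_Mn)

lemma emeasure_snd_W:
  assumes A: "A \<in> sets (Mn n)"
  shows "emeasure W (snd -` A \<inter> space W) = emeasure (measure_pmf (map_pmf sample (pmf_of_set {1..N}))) A"
proof -
  have "emeasure W (snd -` A \<inter> space W) = emeasure (empirical n N uh) A"
    using coupling emeasure_distr[OF measurable_snd_W A] unfolding coupling_def by simp
  also have "\<dots> = emeasure (measure_pmf (map_pmf sample (pmf_of_set {1..N}))) A"
    unfolding empirical_def sample_def[abs_def]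
    by (rule emeasure_distr_pmf_id[OF _ A]) (auto simp: space_Mn)
  finally show ?thesis .
qed

lemma AE_fst_Uset: "AE x in W. fst x \<in> Uset n uL uU"
proof -
  have "emeasure W (fst -` Uset n uL uU \<inter> space W) = emeasure Q (Uset n uL uU)"
    using coupling emeasure_distr[OF measurable_fst_W Uset_sets] unfolding coupling_def by simp
  then have "W.prob (fst -` Uset n uL uU \<inter> space W) = 1" using Q_Uset by (simp add: W.emeasure_eq_measure)
  then have "AE x in W. x \<in> fst -` Uset n uL uU \<inter> space W" by (rule W.AE_prob_1)
  then show ?thesis by eventually_elim auto
qed

lemma AE_snd_sample: "AE x in W. \<exists>j\<in>{1..N}. snd x = sample j"
proof -
  have "sample ` {1..N} = (\<Union>j\<in>{1..N}. {sample j})" by blast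
  also have "\<dots> \<in> sets (Mn n)" using singleton_sets_Mn[OF sample_in_space] by (intro sets.finite_UN) auto
  finally have V: "sample ` {1..N} \<in> sets (Mn n)" .
  have "emeasure W (snd -` (sample ` {1..N}) \<inter> space W) = 1"
    unfolding emeasure_snd_W[OF V] using N_pos
    by (intro measure_pmf.emeasure_eq_1_AE) (auto simp: AE_measure_pmf_iff)
  then have "AE x in W. x \<in> snd -` (sample ` {1..N}) \<inter> space W"
    by (intro W.AE_prob_1) (simp add: W.emeasure_eq_measure)
  then show ?thesis by eventually_elim auto
qed

lemma sample_set_sets: "sample_set j \<in> sets W"
proof -
  have "snd -` {sample j} \<inter> space W \<in> sets W"
    using measurable_sets[OF measurable_snd_W singleton_sets_Mn[OF sample_in_space]] .
  moreover have "snd -` {sample j} \<inter> space W = sample_set j" by (auto simp: sample_set_def)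
  ultimately show ?thesis by simp
qed

lemma measure_sample_set:
  assumes j: "j \<in> {1..N}"
  shows "measure W (sample_set j) = real (multiplicity j) / real N"
proof -
  have "sample_set j = snd -` {sample j} \<inter> space W" by (auto simp: sample_set_def)
  then have "measure W (sample_set j) = measure_pmf.prob (map_pmf sample (pmf_of_set {1..N})) {sample j}"
    using emeasure_snd_W[OF singleton_sets_Mn[OF sample_in_space]]
    by (simp add: W.emeasure_eq_measure measure_pmf.emeasure_eq_measure)
  also have "\<dots> = real (card ({1..N} \<inter> sample -` {sample j})) / real (card {1..N})"
    using N_pos by (simp add: measure_pmf_of_set)
  also have "{1..N} \<inter> sample -` {sample j} = {j'\<in>{1..N}. sample j' = sample j}" by auto
  finally show ?thesis by (simp add: multiplicity_def)
qed

lemma sample_weight_measurable: "sample_weight j \<in> borel_measurable W"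
  unfolding sample_weight_def by (intro borel_measurable_divide borel_measurable_indicator sample_set_sets) simp

lemma multiplicity_pos: assumes j: "j \<in> {1..N}" shows "multiplicity j > 0"
proof -
  have "j \<in> {j'\<in>{1..N}. sample j' = sample j}" using j by simp
  hence "{j'\<in>{1..N}. sample j' = sample j} \<noteq> {}" by blast
  moreover have "finite {j'\<in>{1..N}. sample j' = sample j}" by simp
  ultimately show ?thesis unfolding multiplicity_def using card_gt_0_iff by blast
qed

lemma sample_weight_nonneg: "sample_weight j x \<ge> 0" by (simp add: sample_weight_def)
lemma sample_weight_le_1: "j \<in> {1..N} \<Longrightarrow> sample_weight j x \<le> 1"
proof -
  assume j: "j \<in> {1..N}"
  have "multiplicity j > 0" by (rule multiplicity_pos[OF j])
  thus ?thesis by (auto simp: sample_weight_def indicator_def)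
qed

lemma sample_weight_snd: "sample_weight j x \<noteq> 0 \<Longrightarrow> i \<in> {1..n} \<Longrightarrow> snd x i = uh j i"
  by (auto simp: sample_weight_def sample_set_def sample_def indicator_def split: if_splits)

lemma sum_sample_weight: "AE x in W. (\<Sum>j=1..N. sample_weight j x) = 1"
  using AE_snd_sample AE_space
proof (eventually_elim)
  case (elim x)
  then obtain j0 where j0: "j0 \<in> {1..N}" "snd x = sample j0" by blast
  define J where "J = {j\<in>{1..N}. sample j = snd x}"
  have j0J: "j0 \<in> J" using j0 by (simp add: J_def)
  have fJ: "finite J" by (simp add: J_def)
  have cJ: "card J > 0" using j0J fJ card_gt_0_iff by blast
  have mmJ: "multiplicity j = card J" if "j \<in> J" for j
  proof -
    have "{j'\<in>{1..N}. sample j' = sample j} = J" using that by (auto simp: J_def)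
    thus ?thesis by (simp add: multiplicity_def)
  qed
  have "(\<Sum>j=1..N. sample_weight j x) = (\<Sum>j\<in>{1..N}. if j \<in> J then 1 / real (card J) else 0)"
    using elim mmJ by (intro sum.cong refl) (auto simp: sample_weight_def sample_set_def J_def indicator_def)
  also have "\<dots> = (\<Sum>j\<in>{j\<in>{1..N}. j \<in> J}. 1 / real (card J))"
    by (rule sum.inter_filter[symmetric]) simp
  also have "{j\<in>{1..N}. j \<in> J} = J" by (auto simp: J_def)
  also have "(\<Sum>j\<in>J. 1 / real (card J)) = 1" using cJ by simp
  finally show ?case .
qed

lemma integral_sample_weight: assumes j: "j \<in> {1..N}" shows "integral\<^sup>L W (sample_weight j) = 1 / real N"
proof -
  have "integral\<^sup>L W (sample_weight j) = integral\<^sup>L W (indicator (sample_set j)) / real (multiplicity j)"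
    unfolding sample_weight_def by (rule integral_divide_zero)
  also have "\<dots> = measure W (sample_set j) / real (multiplicity j)" using sample_set_sets by simp
  also have "measure W (sample_set j) = real (multiplicity j) / real N"
    by (rule measure_sample_set[OF j])
  finally show ?thesis using multiplicity_pos[OF j] by simp
qed

lemma AE_fst_box: "AE x in W. \<forall>i\<in>{1..n}. uL i \<le> fst x i \<and> fst x i \<le> uU i"
  using AE_fst_Uset by eventually_elim (auto simp: Uset_def PiE_iff)

lemma AE_snd_box: "AE x in W. \<forall>i\<in>{1..n}. uL i \<le> snd x i \<and> snd x i \<le> uU i"
  using AE_snd_sample
proof eventually_elim
  case (elim x)
  then obtain j where j: "j \<in> {1..N}" "snd x = sample j" by blast
  then show ?case using samples_in_box by (auto simp: sample_def)
qed

lemma integrable_weight_indicator: "j \<in> {1..N} \<Longrightarrow> integrable W (\<lambda>x. sample_weight j x * of_bool (P (clearing_fst x i) (clearing_fst x k)))"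
proof -
  assume j: "j \<in> {1..N}"
  have m: "(\<lambda>x. sample_weight j x * of_bool (P (clearing_fst x i) (clearing_fst x k))) \<in> borel_measurable W"
    using sample_weight_measurable clearing_fst_fun2_measurable by (intro borel_measurable_times) auto
  show ?thesis
    by (rule W.integrable_const_bound[where B=1, OF _ m]) (use sample_weight_le_1[OF j] sample_weight_nonneg in auto)
qed

lemma integrable_weight_indicator_fst: assumes j: "j \<in> {1..N}" and i: "i \<in> {1..n}"
  shows "integrable W (\<lambda>x. sample_weight j x * of_bool (P (clearing_fst x i') (clearing_fst x k)) * (fst x i - a))"
proof -
  have m: "(\<lambda>x. sample_weight j x * of_bool (P (clearing_fst x i') (clearing_fst x k)) * (fst x i - a)) \<in> borel_measurable W"
    using sample_weight_measurable clearing_fst_fun2_measurable fst_component_measurable[OF i] by (intro borel_measurable_times borel_measurable_diff) auto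
  show ?thesis
  proof (rule W.integrable_const_bound[where B="\<bar>uL i\<bar> + \<bar>uU i\<bar> + \<bar>a\<bar>", OF _ m])
    show "AE x in W. norm (sample_weight j x * of_bool (P (clearing_fst x i') (clearing_fst x k)) * (fst x i - a)) \<le> \<bar>uL i\<bar> + \<bar>uU i\<bar> + \<bar>a\<bar>"
      using AE_fst_box
    proof eventually_elim
      case (elim x)
      have "uL i \<le> fst x i \<and> fst x i \<le> uU i" using elim i by blast
      hence f: "\<bar>fst x i - a\<bar> \<le> \<bar>uL i\<bar> + \<bar>uU i\<bar> + \<bar>a\<bar>" by linarith
      have o: "\<bar>sample_weight j x * of_bool (P (clearing_fst x i') (clearing_fst x k))\<bar> \<le> 1" using sample_weight_le_1[OF j] sample_weight_nonneg[of j x] by auto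
      have "\<bar>sample_weight j x * of_bool (P (clearing_fst x i') (clearing_fst x k)) * (fst x i - a)\<bar> \<le> 1 * (\<bar>uL i\<bar> + \<bar>uU i\<bar> + \<bar>a\<bar>)"
        unfolding abs_mult[of "sample_weight j x * _"] by (rule mult_mono) (use o f in auto)
      thus ?case by simp
    qed
  qed
qed

lemma integrable_weight_indicator_dist: assumes j: "j \<in> {1..N}" and i: "i \<in> {1..n}"
  shows "integrable W (\<lambda>x. sample_weight j x * of_bool (P (clearing_fst x i') (clearing_fst x k)) * \<bar>fst x i - snd x i\<bar>)"
proof -
  have m: "(\<lambda>x. sample_weight j x * of_bool (P (clearing_fst x i') (clearing_fst x k)) * \<bar>fst x i - snd x i\<bar>) \<in> borel_measurable W"
    using sample_weight_measurable clearing_fst_fun2_measurable fst_component_measurable[OF i] snd_component_measurable[OF i]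
    by (intro borel_measurable_times borel_measurable_diff borel_measurable_abs) auto
  show ?thesis
  proof (rule W.integrable_const_bound[where B="2 * \<bar>uL i\<bar> + 2 * \<bar>uU i\<bar>", OF _ m])
    show "AE x in W. norm (sample_weight j x * of_bool (P (clearing_fst x i') (clearing_fst x k)) * \<bar>fst x i - snd x i\<bar>) \<le> 2 * \<bar>uL i\<bar> + 2 * \<bar>uU i\<bar>"
      using AE_fst_box AE_snd_box
    proof eventually_elim
      case (elim x)
      have "uL i \<le> fst x i \<and> fst x i \<le> uU i" "uL i \<le> snd x i \<and> snd x i \<le> uU i" using elim i by blast+
      hence f: "\<bar>fst x i - snd x i\<bar> \<le> 2 * \<bar>uL i\<bar> + 2 * \<bar>uU i\<bar>" by linarith
      have o: "\<bar>sample_weight j x * of_bool (P (clearing_fst x i') (clearing_fst x k))\<bar> \<le> 1" using sample_weight_le_1[OF j] sample_weight_nonneg[of j x] by auto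
      have "\<bar>sample_weight j x * of_bool (P (clearing_fst x i') (clearing_fst x k)) * \<bar>fst x i - snd x i\<bar>\<bar> \<le> 1 * (2 * \<bar>uL i\<bar> + 2 * \<bar>uU i\<bar>)"
        unfolding abs_mult[of "sample_weight j x * _"] by (rule mult_mono) (use o f in auto)
      thus ?case by simp
    qed
  qed
qed

lemma sum_integral_weight_clearing:
  assumes int: "\<And>j i l. j \<in> {1..N} \<Longrightarrow> i \<in> {1..n} \<Longrightarrow> l \<in> {i..n+1} \<Longrightarrow>
      integrable W (\<lambda>x. sample_weight j x * of_bool (clearing_fst x i = l) * G i l x)"
    and meas: "(\<lambda>x. \<Sum>i=1..n. G i (clearing_fst x i) x) \<in> borel_measurable W"
  shows "(\<Sum>j=1..N. \<Sum>i=1..n. \<Sum>l=i..n+1. \<integral>x. sample_weight j x * of_bool (clearing_fst x i = l) * G i l x \<partial>W)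
       = (\<integral>x. (\<Sum>i=1..n. G i (clearing_fst x i) x) \<partial>W)"
proof -
  let ?f = "\<lambda>j i l x. sample_weight j x * of_bool (clearing_fst x i = l) * G i l x"
  have "(\<Sum>j=1..N. \<Sum>i=1..n. \<Sum>l=i..n+1. integral\<^sup>L W (?f j i l))
      = (\<integral>x. (\<Sum>j=1..N. \<Sum>i=1..n. \<Sum>l=i..n+1. ?f j i l x) \<partial>W)"
    by (rule integral_triple_sum(1)) (rule int)
  also have "\<dots> = (\<integral>x. (\<Sum>i=1..n. G i (clearing_fst x i) x) \<partial>W)"
  proof (rule integral_cong_AE)
    show "(\<lambda>x. \<Sum>j=1..N. \<Sum>i=1..n. \<Sum>l=i..n+1. ?f j i l x) \<in> borel_measurable W"
      by (rule borel_measurable_integrable, rule integral_triple_sum(2)) (rule int)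
    show "AE x in W. (\<Sum>j=1..N. \<Sum>i=1..n. \<Sum>l=i..n+1. ?f j i l x) = (\<Sum>i=1..n. G i (clearing_fst x i) x)"
      using sum_sample_weight
    proof eventually_elim
      case (elim x)
      have "(\<Sum>i=1..n. \<Sum>l=i..n+1. of_bool (clearing_fst x i = l) * G i l x) = (\<Sum>i=1..n. G i (clearing_fst x i) x)"
        unfolding clearing_fst_def by (intro sum.cong refl sum_of_bool_clearing_stage) auto
      then show ?case
        using elim by (simp add: mult.assoc flip: sum_distrib_left sum_distrib_right)
    qed
  qed (rule meas)
  finally show ?thesis .
qed

text \<open>Conditioning on sample \<open>j\<close> and on the clearing stages \<open>\<lambda>\<close> of the first component:
  \<open>cond_end i l j = P(\<lambda> i = l | j)\<close>, \<open>cond_start k l j = P(\<lambda> k = l \<noteq> \<lambda> (k - 1) | j)\<close>, and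
  \<open>cond_down\<close>, \<open>cond_up\<close> split the conditional mean shift \<open>cond_shift\<close> of \<open>u i\<close> into its parts
  towards \<open>uL i\<close> and \<open>uU i\<close>. This is the LP point induced by the coupling.\<close>

definition cond_start :: "nat \<Rightarrow> nat \<Rightarrow> nat \<Rightarrow> real" where
  "cond_start k l j = real N * (\<integral>x. sample_weight j x * of_bool (clearing_fst x k = l \<and> clearing_fst x (k-1) \<noteq> l) \<partial>W)"
definition cond_end :: "nat \<Rightarrow> nat \<Rightarrow> nat \<Rightarrow> real" where
  "cond_end i l j = real N * (\<integral>x. sample_weight j x * of_bool (clearing_fst x i = l) \<partial>W)"
definition cond_shift :: "nat \<Rightarrow> nat \<Rightarrow> nat \<Rightarrow> real" where
  "cond_shift i l j = real N * (\<integral>x. sample_weight j x * of_bool (clearing_fst x i = l) * (fst x i - uh j i) \<partial>W)"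
definition cond_down :: "nat \<Rightarrow> nat \<Rightarrow> nat \<Rightarrow> real" where
  "cond_down i l j = max (- cond_shift i l j) 0 / (uh j i - uL i)"
definition cond_up :: "nat \<Rightarrow> nat \<Rightarrow> nat \<Rightarrow> real" where
  "cond_up i l j = max (cond_shift i l j) 0 / (uU i - uh j i)"
definition l1_cost :: "(nat \<Rightarrow> real) \<times> (nat \<Rightarrow> real) \<Rightarrow> real" where
  "l1_cost x = (\<Sum>i=1..n. \<bar>fst x i - snd x i\<bar>)"

lemma integrable_weight_clearing: "j \<in> {1..N} \<Longrightarrow> integrable W (\<lambda>x. sample_weight j x * of_bool (clearing_fst x i = l))"
  using integrable_weight_indicator[of j "\<lambda>a b. a = l" i i] by simp

lemma integrable_weight_clearing_start: "j \<in> {1..N} \<Longrightarrow> integrable W (\<lambda>x. sample_weight j x * of_bool (clearing_fst x k = l \<and> clearing_fst x (k-1) \<noteq> l))"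
  using integrable_weight_indicator[of j "\<lambda>a b. a = l \<and> b \<noteq> l" k "k-1"] by simp

lemma integrable_weight_clearing_fst: "j \<in> {1..N} \<Longrightarrow> i \<in> {1..n} \<Longrightarrow> integrable W (\<lambda>x. sample_weight j x * of_bool (clearing_fst x i' = l) * (fst x i - a))"
  using integrable_weight_indicator_fst[of j i "\<lambda>a b. a = l" i' i' a] by simp

lemma integrable_weight_clearing_dist: "j \<in> {1..N} \<Longrightarrow> i \<in> {1..n} \<Longrightarrow> integrable W (\<lambda>x. sample_weight j x * of_bool (clearing_fst x i' = l) * \<bar>fst x i - snd x i\<bar>)"
  using integrable_weight_indicator_dist[of j i "\<lambda>a b. a = l" i' i'] by simp

lemma Psum_cond_start:
  assumes j: "j \<in> {1..N}" and i: "i \<in> {1..n}" and l: "l \<in> {i..n+1}"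
  shows "Psum cond_start i l j = cond_end i l j"
proof -
  have "Psum cond_start i l j = real N * (\<Sum>k=1..i. \<integral>x. sample_weight j x * of_bool (clearing_fst x k = l \<and> clearing_fst x (k-1) \<noteq> l) \<partial>W)"
    unfolding Psum_def cond_start_def by (simp add: sum_distrib_left)
  also have "(\<Sum>k=1..i. \<integral>x. sample_weight j x * of_bool (clearing_fst x k = l \<and> clearing_fst x (k-1) \<noteq> l) \<partial>W)
      = (\<integral>x. (\<Sum>k=1..i. sample_weight j x * of_bool (clearing_fst x k = l \<and> clearing_fst x (k-1) \<noteq> l)) \<partial>W)"
    by (rule Bochner_Integration.integral_sum[symmetric], rule integrable_weight_clearing_start[OF j])
  also have "\<dots> = (\<integral>x. sample_weight j x * of_bool (clearing_fst x i = l) \<partial>W)"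
  proof (intro Bochner_Integration.integral_cong refl)
    fix x
    have "(\<Sum>k=1..i. sample_weight j x * of_bool (clearing_fst x k = l \<and> clearing_fst x (k-1) \<noteq> l)) =
        sample_weight j x * (\<Sum>k=1..i. of_bool (clearing_fst x k = l \<and> clearing_fst x (k-1) \<noteq> l))"
      by (simp add: sum_distrib_left)
    also have "(\<Sum>k=1..i. of_bool (clearing_fst x k = l \<and> clearing_fst x (k-1) \<noteq> l) :: real) = of_bool (clearing_fst x i = l)"
      unfolding clearing_fst_def by (rule clearing_stage_telescope) (use i l in auto)
    finally show "(\<Sum>k=1..i. sample_weight j x * of_bool (clearing_fst x k = l \<and> clearing_fst x (k-1) \<noteq> l)) = sample_weight j x * of_bool (clearing_fst x i = l)" .
  qed
  finally show ?thesis by (simp add: cond_end_def)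
qed

lemma sum_cond_end:
  assumes j: "j \<in> {1..N}" and i: "i \<in> {1..n}"
  shows "(\<Sum>l=i..n+1. cond_end i l j) = 1"
proof -
  have "(\<Sum>l=i..n+1. cond_end i l j) = real N * (\<Sum>l=i..n+1. \<integral>x. sample_weight j x * of_bool (clearing_fst x i = l) \<partial>W)"
    by (simp only: cond_end_def sum_distrib_left)
  also have "(\<Sum>l=i..n+1. \<integral>x. sample_weight j x * of_bool (clearing_fst x i = l) \<partial>W) = (\<integral>x. (\<Sum>l=i..n+1. sample_weight j x * of_bool (clearing_fst x i = l)) \<partial>W)"
    by (rule Bochner_Integration.integral_sum[symmetric], rule integrable_weight_clearing[OF j])
  also have "\<dots> = integral\<^sup>L W (sample_weight j)"
  proof (intro Bochner_Integration.integral_cong refl)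
    fix x
    have "(\<Sum>l=i..n+1. sample_weight j x * of_bool (clearing_fst x i = l)) = (\<Sum>l=i..n+1. of_bool (clearing_fst x i = l) * sample_weight j x)"
      by (simp add: mult.commute)
    also have "\<dots> = sample_weight j x" unfolding clearing_fst_def by (rule sum_of_bool_clearing_stage[OF i])
    finally show "(\<Sum>l=i..n+1. sample_weight j x * of_bool (clearing_fst x i = l)) = sample_weight j x" .
  qed
  also have "\<dots> = 1 / real N" by (rule integral_sample_weight[OF j])
  finally show ?thesis using N_pos by simp
qed

lemma cond_start_nonneg: "cond_start k l j \<ge> 0"
  unfolding cond_start_def by (intro mult_nonneg_nonneg integral_nonneg_AE) (auto intro!: AE_I2 simp: sample_weight_nonneg)

lemma cond_end_nonneg: "cond_end i l j \<ge> 0"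
  unfolding cond_end_def by (intro mult_nonneg_nonneg integral_nonneg_AE) (auto intro!: AE_I2 simp: sample_weight_nonneg)

lemma cond_shift_bounds:
  assumes j: "j \<in> {1..N}" and i: "i \<in> {1..n}"
  shows "cond_end i l j * (uL i - uh j i) \<le> cond_shift i l j"
    and "cond_shift i l j \<le> cond_end i l j * (uU i - uh j i)"
proof -
  let ?w = "\<lambda>x. sample_weight j x * of_bool (clearing_fst x i = l)"
  have int: "integrable W (\<lambda>x. ?w x * (fst x i - uh j i))" "integrable W (\<lambda>x. ?w x * b)" for b
    by (rule integrable_weight_clearing_fst[OF j i], rule integrable_mult_left, rule integrable_weight_clearing[OF j])
  have box: "AE x in W. uL i \<le> fst x i \<and> fst x i \<le> uU i"
    using AE_fst_box by eventually_elim (use i in blast)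
  have "(\<integral>x. ?w x \<partial>W) * (uL i - uh j i) \<le> (\<integral>x. ?w x * (fst x i - uh j i) \<partial>W)"
    unfolding integral_mult_left_zero[symmetric]
    by (rule integral_mono_AE[OF int(2) int(1)], use box in eventually_elim)
      (auto intro!: mult_left_mono simp: sample_weight_nonneg)
  moreover have "(\<integral>x. ?w x * (fst x i - uh j i) \<partial>W) \<le> (\<integral>x. ?w x \<partial>W) * (uU i - uh j i)"
    unfolding integral_mult_left_zero[symmetric]
    by (rule integral_mono_AE[OF int(1) int(2)], use box in eventually_elim)
      (auto intro!: mult_left_mono simp: sample_weight_nonneg)
  ultimately show "cond_end i l j * (uL i - uh j i) \<le> cond_shift i l j"
    and "cond_shift i l j \<le> cond_end i l j * (uU i - uh j i)"
    unfolding cond_shift_def cond_end_def by (simp_all add: mult.assoc mult_left_mono)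
qed

lemma abs_cond_shift_le:
  assumes j: "j \<in> {1..N}" and i: "i \<in> {1..n}"
  shows "\<bar>cond_shift i l j\<bar> \<le> real N * (\<integral>x. sample_weight j x * of_bool (clearing_fst x i = l) * \<bar>fst x i - snd x i\<bar> \<partial>W)"
proof -
  have "\<bar>\<integral>x. sample_weight j x * of_bool (clearing_fst x i = l) * (fst x i - uh j i) \<partial>W\<bar> \<le> (\<integral>x. \<bar>sample_weight j x * of_bool (clearing_fst x i = l) * (fst x i - uh j i)\<bar> \<partial>W)"
    by (rule integral_abs_bound)
  also have "\<dots> = (\<integral>x. sample_weight j x * of_bool (clearing_fst x i = l) * \<bar>fst x i - snd x i\<bar> \<partial>W)"
  proof (intro Bochner_Integration.integral_cong refl)
    fix x
    show "\<bar>sample_weight j x * of_bool (clearing_fst x i = l) * (fst x i - uh j i)\<bar> = sample_weight j x * of_bool (clearing_fst x i = l) * \<bar>fst x i - snd x i\<bar>"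
    proof (cases "sample_weight j x = 0")
      case False
      hence "snd x i = uh j i" using sample_weight_snd i by blast
      thus ?thesis by (simp add: abs_mult sample_weight_nonneg)
    qed simp
  qed
  finally have h: "\<bar>\<integral>x. sample_weight j x * of_bool (clearing_fst x i = l) * (fst x i - uh j i) \<partial>W\<bar> \<le> (\<integral>x. sample_weight j x * of_bool (clearing_fst x i = l) * \<bar>fst x i - snd x i\<bar> \<partial>W)" .
  have "\<bar>cond_shift i l j\<bar> = real N * \<bar>\<integral>x. sample_weight j x * of_bool (clearing_fst x i = l) * (fst x i - uh j i) \<partial>W\<bar>"
    unfolding cond_shift_def abs_mult by simp
  also have "\<dots> \<le> real N * (\<integral>x. sample_weight j x * of_bool (clearing_fst x i = l) * \<bar>fst x i - snd x i\<bar> \<partial>W)"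
    by (rule mult_left_mono[OF h]) simp
  finally show ?thesis .
qed

lemma cond_down_nonneg: "j \<in> {1..N} \<Longrightarrow> i \<in> {1..n} \<Longrightarrow> 0 \<le> cond_down i l j"
  and cond_up_nonneg: "j \<in> {1..N} \<Longrightarrow> i \<in> {1..n} \<Longrightarrow> 0 \<le> cond_up i l j"
  using samples_in_box by (auto simp: cond_down_def cond_up_def)

lemma cond_up_scaled:
  assumes "j \<in> {1..N}" "i \<in> {1..n}"
  shows "(uU i - uh j i) * cond_up i l j = max (cond_shift i l j) 0"
  using cond_shift_bounds(2)[OF assms, of l] samples_in_box assms
  by (cases "uU i = uh j i") (auto simp: cond_up_def)

lemma cond_down_scaled:
  assumes "j \<in> {1..N}" "i \<in> {1..n}"
  shows "(uh j i - uL i) * cond_down i l j = max (- cond_shift i l j) 0"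
  using cond_shift_bounds(1)[OF assms, of l] samples_in_box assms
  by (cases "uh j i = uL i") (auto simp: cond_down_def)

lemma cond_down_up_shift:
  assumes "j \<in> {1..N}" "i \<in> {1..n}"
  shows "(uL i - uh j i) * cond_down i l j + (uU i - uh j i) * cond_up i l j = cond_shift i l j"
  using cond_down_scaled[OF assms, of l] cond_up_scaled[OF assms, of l] by (simp add: algebra_simps)

lemma cond_down_up_transport:
  assumes "j \<in> {1..N}" "i \<in> {1..n}"
  shows "(uh j i - uL i) * cond_down i l j + (uU i - uh j i) * cond_up i l j = \<bar>cond_shift i l j\<bar>"
  using cond_down_scaled[OF assms, of l] cond_up_scaled[OF assms, of l] by simp

lemma cond_down_add_cond_up_le:
  assumes j: "j \<in> {1..N}" and i: "i \<in> {1..n}"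
  shows "cond_down i l j + cond_up i l j \<le> cond_end i l j"
proof (cases "cond_shift i l j \<ge> 0")
  case True
  then have "cond_down i l j = 0" by (simp add: cond_down_def)
  moreover have "cond_up i l j \<le> cond_end i l j"
  proof (cases "uU i = uh j i")
    case False
    then have "uU i - uh j i > 0" using samples_in_box i j by force
    then show ?thesis using True cond_shift_bounds(2)[OF j i, of l] by (simp add: cond_up_def divide_le_eq)
  qed (simp add: cond_up_def cond_end_nonneg)
  ultimately show ?thesis by simp
next
  case False
  then have "cond_up i l j = 0" by (simp add: cond_up_def)
  moreover have "cond_down i l j \<le> cond_end i l j"
  proof (cases "uh j i = uL i")
    case False
    then have pos: "uh j i - uL i > 0" using samples_in_box i j by force
    have "cond_down i l j = - cond_shift i l j / (uh j i - uL i)"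
      using \<open>\<not> cond_shift i l j \<ge> 0\<close> by (simp add: cond_down_def)
    also have "\<dots> \<le> cond_end i l j"
      by (subst pos_divide_le_eq[OF pos]) (use cond_shift_bounds(1)[OF j i, of l] in \<open>simp add: algebra_simps\<close>)
    finally show ?thesis .
  qed (simp add: cond_down_def cond_end_nonneg)
  ultimately show ?thesis by simp
qed

lemma l1_cost_measurable: "l1_cost \<in> borel_measurable W"
  unfolding l1_cost_def using fst_component_measurable snd_component_measurable
  by (intro borel_measurable_sum borel_measurable_abs borel_measurable_diff) auto

lemma integrable_l1_cost: "integrable W l1_cost"
proof (rule W.integrable_const_bound[where B = "\<Sum>i=1..n. 2 * \<bar>uL i\<bar> + 2 * \<bar>uU i\<bar>", OF _ l1_cost_measurable])
  show "AE x in W. norm (l1_cost x) \<le> (\<Sum>i=1..n. 2 * \<bar>uL i\<bar> + 2 * \<bar>uU i\<bar>)"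
    using AE_fst_box AE_snd_box
  proof eventually_elim
    case (elim x)
    then have "\<bar>fst x i - snd x i\<bar> \<le> 2 * \<bar>uL i\<bar> + 2 * \<bar>uU i\<bar>" if "i \<in> {1..n}" for i
      using that by fastforce
    then have "l1_cost x \<le> (\<Sum>i=1..n. 2 * \<bar>uL i\<bar> + 2 * \<bar>uU i\<bar>)"
      unfolding l1_cost_def by (intro sum_mono) blast
    then show ?case by (simp add: l1_cost_def sum_nonneg)
  qed
qed

lemma integral_l1_cost_nonneg: "0 \<le> integral\<^sup>L W l1_cost"
  by (auto simp: l1_cost_def intro!: integral_nonneg_AE AE_I2 sum_nonneg)

lemma integral_l1_cost_less:
  assumes "(\<integral>\<^sup>+x. ennreal (\<Sum>i=1..n. \<bar>fst x i - snd x i\<bar>) \<partial>W) < ennreal b"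
  shows "integral\<^sup>L W l1_cost < b"
proof -
  have "ennreal (integral\<^sup>L W l1_cost) = (\<integral>\<^sup>+x. ennreal (l1_cost x) \<partial>W)"
    by (rule nn_integral_eq_integral[OF integrable_l1_cost, symmetric])
      (auto simp: l1_cost_def intro!: AE_I2 sum_nonneg)
  also have "\<dots> < ennreal b" using assms by (simp add: l1_cost_def)
  finally show ?thesis by (subst (asm) ennreal_less_iff) (auto intro: integral_l1_cost_nonneg)
qed

lemma sum_integral_l1_cost:
  "(\<Sum>j=1..N. \<Sum>i=1..n. \<Sum>l=i..n+1. \<integral>x. sample_weight j x * of_bool (clearing_fst x i = l) * \<bar>fst x i - snd x i\<bar> \<partial>W) = integral\<^sup>L W l1_cost"
proof -
  have "(\<Sum>j=1..N. \<Sum>i=1..n. \<Sum>l=i..n+1. \<integral>x. sample_weight j x * of_bool (clearing_fst x i = l) * (\<lambda>i l x. \<bar>fst x i - snd x i\<bar>) i l x \<partial>W)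
     = (\<integral>x. (\<Sum>i=1..n. (\<lambda>i l x. \<bar>fst x i - snd x i\<bar>) i (clearing_fst x i) x) \<partial>W)"
  proof (rule sum_integral_weight_clearing)
    fix j i l assume "j \<in> {1..N}" "i \<in> {1..n}"
    thus "integrable W (\<lambda>x. sample_weight j x * of_bool (clearing_fst x i = l) * \<bar>fst x i - snd x i\<bar>)" by (rule integrable_weight_clearing_dist)
  next
    show "(\<lambda>x. \<Sum>i=1..n. \<bar>fst x i - snd x i\<bar>) \<in> borel_measurable W"
      using fst_component_measurable snd_component_measurable by (intro borel_measurable_sum borel_measurable_abs borel_measurable_diff) auto
  qed
  thus ?thesis by (simp only: l1_cost_def[abs_def])
qed

lemma cond_shift_add_cond_end:
  assumes j: "j \<in> {1..N}" and i: "i \<in> {1..n}"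
  shows "cond_shift i l j + cond_end i l j * (uh j i - s i)
    = real N * (\<integral>x. sample_weight j x * of_bool (clearing_fst x i = l) * (fst x i - s i) \<partial>W)"
proof -
  let ?w = "\<lambda>x. sample_weight j x * of_bool (clearing_fst x i = l)"
  have "cond_shift i l j + cond_end i l j * (uh j i - s i)
      = real N * ((\<integral>x. ?w x * (fst x i - uh j i) \<partial>W) + (\<integral>x. ?w x * (uh j i - s i) \<partial>W))"
    unfolding cond_shift_def cond_end_def integral_mult_left_zero by (simp add: algebra_simps)
  also have "\<dots> = real N * (\<integral>x. ?w x * (fst x i - uh j i) + ?w x * (uh j i - s i) \<partial>W)"
  proof -
    have "integrable W (\<lambda>x. ?w x * (uh j i - s i))"
      by (rule integrable_mult_left, rule integrable_weight_clearing[OF j])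
    then show ?thesis
      using Bochner_Integration.integral_add[OF integrable_weight_clearing_fst[OF j i]] by simp
  qed
  also have "\<dots> = real N * (\<integral>x. ?w x * (fst x i - s i) \<partial>W)"
    by (simp add: algebra_simps)
  finally show ?thesis .
qed

lemma integral_fval_eq:
  "(\<integral>x. fval n c d C s (fst x) \<partial>W) = (1 / real N) * (\<Sum>j=1..N. \<Sum>i=1..n. \<Sum>l=i..n+1.
      pic n c d C i l * (cond_shift i l j + cond_end i l j * (uh j i - s i)))"
proof -
  let ?w = "\<lambda>j i l x. sample_weight j x * of_bool (clearing_fst x i = l)"
  have "(\<integral>x. fval n c d C s (fst x) \<partial>W) = (\<integral>x. (\<Sum>i=1..n. pic n c d C i (clearing_fst x i) * (fst x i - s i)) \<partial>W)"
    by (simp add: fval_eq_clearing_sum clearing_fst_def)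
  also have "\<dots> = (\<Sum>j=1..N. \<Sum>i=1..n. \<Sum>l=i..n+1. \<integral>x. ?w j i l x * (pic n c d C i l * (fst x i - s i)) \<partial>W)"
  proof (rule sum_integral_weight_clearing[symmetric])
    fix j i l assume "j \<in> {1..N}" "i \<in> {1..n}"
    then have "integrable W (\<lambda>x. pic n c d C i l * (?w j i l x * (fst x i - s i)))"
      by (intro integrable_mult_right integrable_weight_clearing_fst)
    then show "integrable W (\<lambda>x. ?w j i l x * (pic n c d C i l * (fst x i - s i)))"
      by (simp add: algebra_simps)
  next
    show "(\<lambda>x. \<Sum>i=1..n. pic n c d C i (clearing_fst x i) * (fst x i - s i)) \<in> borel_measurable W"
      using clearing_fst_fun_measurable fst_component_measurable
      by (intro borel_measurable_sum borel_measurable_times borel_measurable_diff) auto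
  qed
  also have "\<dots> = (\<Sum>j=1..N. \<Sum>i=1..n. \<Sum>l=i..n+1.
      (1 / real N) * (pic n c d C i l * (cond_shift i l j + cond_end i l j * (uh j i - s i))))"
  proof (intro sum.cong refl)
    fix j i l assume "j \<in> {1..N}" "i \<in> {1..n}"
    then have "(1 / real N) * (pic n c d C i l * (cond_shift i l j + cond_end i l j * (uh j i - s i)))
        = pic n c d C i l * (\<integral>x. ?w j i l x * (fst x i - s i) \<partial>W)"
      using N_pos by (simp add: cond_shift_add_cond_end)
    moreover have "(\<integral>x. ?w j i l x * (pic n c d C i l * (fst x i - s i)) \<partial>W)
        = pic n c d C i l * (\<integral>x. ?w j i l x * (fst x i - s i) \<partial>W)"
      by (subst integral_mult_right_zero[symmetric]) (simp add: ac_simps)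
    ultimately show "(\<integral>x. ?w j i l x * (pic n c d C i l * (fst x i - s i)) \<partial>W)
        = (1 / real N) * (pic n c d C i l * (cond_shift i l j + cond_end i l j * (uh j i - s i)))"
      by simp
  qed
  finally show ?thesis by (simp only: sum_distrib_left)
qed

lemma sum_abs_cond_shift_le:
  "(\<Sum>j=1..N. \<Sum>i=1..n. \<Sum>l=i..n+1. \<bar>cond_shift i l j\<bar>) \<le> real N * integral\<^sup>L W l1_cost"
proof -
  have "(\<Sum>j=1..N. \<Sum>i=1..n. \<Sum>l=i..n+1. \<bar>cond_shift i l j\<bar>) \<le> (\<Sum>j=1..N. \<Sum>i=1..n. \<Sum>l=i..n+1.
      real N * (\<integral>x. sample_weight j x * of_bool (clearing_fst x i = l) * \<bar>fst x i - snd x i\<bar> \<partial>W))"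
    using abs_cond_shift_le by (intro sum_mono) auto
  also have "\<dots> = real N * integral\<^sup>L W l1_cost"
    by (simp only: sum_distrib_left flip: sum_integral_l1_cost)
  finally show ?thesis .
qed

abbreviation scaled :: "real \<Rightarrow> (nat \<Rightarrow> nat \<Rightarrow> nat \<Rightarrow> real) \<Rightarrow> nat \<Rightarrow> nat \<Rightarrow> nat \<Rightarrow> real" where
  "scaled \<theta> f \<equiv> \<lambda>i l j. \<theta> * f i l j"

lemma LP_feasible_scaled:
  assumes \<theta>: "0 \<le> \<theta>" "\<theta> \<le> 1" and budget: "\<theta> * integral\<^sup>L W l1_cost \<le> eps"
  shows "LP_feasible n N uL uU uh eps cond_start (scaled \<theta> cond_down) (scaled \<theta> cond_up)"
  unfolding LP_feasible_def
proof (intro conjI ballI)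
  let ?S = "\<Sum>j=1..N. \<Sum>i=1..n. \<Sum>l=i..n+1.
    (uh j i - uL i) * (\<theta> * cond_down i l j) + (uU i - uh j i) * (\<theta> * cond_up i l j)"
  have "?S \<le> (\<Sum>j=1..N. \<Sum>i=1..n. \<Sum>l=i..n+1. \<theta> * \<bar>cond_shift i l j\<bar>)"
  proof (intro sum_mono)
    fix j i l assume ji: "j \<in> {1..N}" "i \<in> {1..n}"
    have "(uh j i - uL i) * (\<theta> * cond_down i l j) + (uU i - uh j i) * (\<theta> * cond_up i l j)
        = \<theta> * ((uh j i - uL i) * cond_down i l j + (uU i - uh j i) * cond_up i l j)"
      by (simp add: algebra_simps)
    then show "(uh j i - uL i) * (\<theta> * cond_down i l j) + (uU i - uh j i) * (\<theta> * cond_up i l j)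
        \<le> \<theta> * \<bar>cond_shift i l j\<bar>"
      using cond_down_up_transport[OF ji] by simp
  qed
  also have "\<dots> \<le> \<theta> * (real N * integral\<^sup>L W l1_cost)"
    unfolding sum_distrib_left[symmetric] by (rule mult_left_mono[OF sum_abs_cond_shift_le \<theta>(1)])
  also have "\<dots> \<le> real N * eps"
    using mult_left_mono[OF budget, of "real N"] by (simp add: mult.left_commute)
  finally have S: "?S \<le> real N * eps" .
  show "(1 / real N) * ?S \<le> eps" using mult_left_mono[OF S, of "1 / real N"] N_pos by simp
next
  fix i j assume "i \<in> {1..n}" "j \<in> {1..N}"
  then show "(\<Sum>l=i..n+1. Psum cond_start i l j) = 1"
    using Psum_cond_start sum_cond_end by simp
next
  fix i l j assume i: "i \<in> {1..n}" and l: "l \<in> {i..n+1}" and j: "j \<in> {1..N}"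
  have "\<theta> * (cond_down i l j + cond_up i l j) \<le> cond_down i l j + cond_up i l j"
    using cond_down_nonneg[OF j i] cond_up_nonneg[OF j i] \<theta> by (intro mult_left_le_one_le) auto
  then show "Psum cond_start i l j - \<theta> * cond_down i l j - \<theta> * cond_up i l j \<ge> 0"
    using Psum_cond_start[OF j i l] cond_down_add_cond_up_le[OF j i, of l] by (simp add: algebra_simps)
qed (use cond_start_nonneg cond_down_nonneg cond_up_nonneg \<theta>(1) in auto)

lemma LP_obj_scaled:
  "LP_obj n N c d C uL uU uh s cond_start (scaled \<theta> cond_down) (scaled \<theta> cond_up) = (1 / real N) *
      (\<Sum>j=1..N. \<Sum>i=1..n. \<Sum>l=i..n+1. pic n c d C i l * (\<theta> * cond_shift i l j + cond_end i l j * (uh j i - s i)))"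
  unfolding LP_obj_def
proof (intro arg_cong[where f = "\<lambda>t. (1 / real N) * t"] sum.cong refl)
  fix j i l assume j: "j \<in> {1..N}" and i: "i \<in> {1..n}" and l: "l \<in> {i..n+1}"
  have "(uL i - uh j i) * (\<theta> * cond_down i l j) + (uU i - uh j i) * (\<theta> * cond_up i l j)
      = \<theta> * ((uL i - uh j i) * cond_down i l j + (uU i - uh j i) * cond_up i l j)"
    by (simp add: algebra_simps)
  also have "\<dots> = \<theta> * cond_shift i l j" using cond_down_up_shift[OF j i] by simp
  finally have "(uL i - uh j i) * (\<theta> * cond_down i l j) + (uU i - uh j i) * (\<theta> * cond_up i l j)
      = \<theta> * cond_shift i l j" .
  then show "pic n c d C i l * ((uL i - uh j i) * (\<theta> * cond_down i l j) + (uU i - uh j i) * (\<theta> * cond_up i l j)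
      + Psum cond_start i l j * (uh j i - s i))
    = pic n c d C i l * (\<theta> * cond_shift i l j + cond_end i l j * (uh j i - s i))"
    using Psum_cond_start[OF j i l] by simp
qed

lemma sum_pic_unscaled_shift_le:
  assumes "\<theta> \<le> 1"
  shows "(\<Sum>j=1..N. \<Sum>i=1..n. \<Sum>l=i..n+1. pic n c d C i l * ((1 - \<theta>) * cond_shift i l j))
    \<le> real N * ((\<Sum>i=1..n. \<Sum>l=i..n+1. \<bar>pic n c d C i l\<bar>) * ((1 - \<theta>) * integral\<^sup>L W l1_cost))"
proof -
  define M where "M = (\<Sum>i=1..n. \<Sum>l=i..n+1. \<bar>pic n c d C i l\<bar>)"
  have "pic n c d C i l * ((1 - \<theta>) * cond_shift i l j) \<le> M * ((1 - \<theta>) * \<bar>cond_shift i l j\<bar>)"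
    if "i \<in> {1..n}" "l \<in> {i..n+1}" for i l j
  proof -
    have "pic n c d C i l * ((1 - \<theta>) * cond_shift i l j) \<le> \<bar>pic n c d C i l\<bar> * ((1 - \<theta>) * \<bar>cond_shift i l j\<bar>)"
      using assms abs_ge_self[of "pic n c d C i l * ((1 - \<theta>) * cond_shift i l j)"] by (simp add: abs_mult)
    also have "\<dots> \<le> M * ((1 - \<theta>) * \<bar>cond_shift i l j\<bar>)"
      unfolding M_def using that assms by (intro mult_right_mono abs_le_sum_sum_abs) auto
    finally show ?thesis .
  qed
  then have "(\<Sum>j=1..N. \<Sum>i=1..n. \<Sum>l=i..n+1. pic n c d C i l * ((1 - \<theta>) * cond_shift i l j))
      \<le> M * ((1 - \<theta>) * (\<Sum>j=1..N. \<Sum>i=1..n. \<Sum>l=i..n+1. \<bar>cond_shift i l j\<bar>))"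
    unfolding sum_distrib_left by (intro sum_mono) auto
  also have "\<dots> \<le> M * ((1 - \<theta>) * (real N * integral\<^sup>L W l1_cost))"
    using assms by (intro mult_left_mono[OF mult_left_mono[OF sum_abs_cond_shift_le]])
      (auto simp: M_def intro: sum_nonneg)
  finally show ?thesis unfolding M_def by (simp add: ac_simps)
qed

text \<open>The induced LP point scaled by \<open>\<theta>\<close> misses the expected cost only by the unscaled part
  of the shifts, whose total is at most the transport cost.\<close>
lemma integral_fval_le_LP_val_plus:
  assumes \<theta>: "0 \<le> \<theta>" "\<theta> \<le> 1" and budget: "\<theta> * integral\<^sup>L W l1_cost \<le> eps"
  shows "(\<integral>x. fval n c d C s (fst x) \<partial>W) \<le> LP_val n N c d C uL uU uh s eps
      + (\<Sum>i=1..n. \<Sum>l=i..n+1. \<bar>pic n c d C i l\<bar>) * ((1 - \<theta>) * integral\<^sup>L W l1_cost)"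
proof -
  define R where "R = (\<Sum>j=1..N. \<Sum>i=1..n. \<Sum>l=i..n+1. pic n c d C i l * ((1 - \<theta>) * cond_shift i l j))"
  have "LP_obj n N c d C uL uU uh s cond_start (scaled \<theta> cond_down) (scaled \<theta> cond_up)
      \<le> LP_val n N c d C uL uU uh s eps"
    unfolding LP_val_def using LP_feasible_scaled[OF \<theta> budget]
    by (intro cSup_upper[OF _ bdd_above_LP_values]) blast
  moreover have "(\<Sum>j=1..N. \<Sum>i=1..n. \<Sum>l=i..n+1.
        pic n c d C i l * (cond_shift i l j + cond_end i l j * (uh j i - s i)))
      = (\<Sum>j=1..N. \<Sum>i=1..n. \<Sum>l=i..n+1.
        pic n c d C i l * (\<theta> * cond_shift i l j + cond_end i l j * (uh j i - s i))) + R"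
    unfolding R_def sum.distrib[symmetric] by (intro sum.cong refl) (simp add: algebra_simps)
  then have "(\<integral>x. fval n c d C s (fst x) \<partial>W)
      = LP_obj n N c d C uL uU uh s cond_start (scaled \<theta> cond_down) (scaled \<theta> cond_up) + R / real N"
    unfolding integral_fval_eq LP_obj_scaled by (simp only: distrib_left) simp
  moreover have "R / real N \<le> (\<Sum>i=1..n. \<Sum>l=i..n+1. \<bar>pic n c d C i l\<bar>) * ((1 - \<theta>) * integral\<^sup>L W l1_cost)"
    using sum_pic_unscaled_shift_le[OF \<theta>(2)] N_pos unfolding R_def by (simp add: field_simps)
  ultimately show ?thesis by linarith
qed

end

text \<open>Couplings within \<open>eps + \<delta>\<close> of the empirical distribution exist for every \<open>\<delta> > 0\<close>; scaling
  the transport part of the induced LP point by \<open>\<theta> \<approx> 1\<close> restores feasibility at a cost that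
  vanishes with \<open>\<delta>\<close>.\<close>
lemma (in dro_data) integral_fval_le_LP_val:
  assumes eps: "eps \<ge> 0" and Q: "Q \<in> Dball n uL uU N uh eps"
  shows "(\<integral>u. fval n c d C s u \<partial>Q) \<le> LP_val n N c d C uL uU uh s eps"
proof (rule field_le_epsilon)
  fix e :: real assume e: "0 < e"
  define M where "M = (\<Sum>i=1..n. \<Sum>l=i..n+1. \<bar>pic n c d C i l\<bar>)"
  have M0: "M \<ge> 0" unfolding M_def by (intro sum_nonneg) auto
  define \<delta> where "\<delta> = e / (M + 1)"
  have \<delta>0: "\<delta> > 0" using e M0 by (simp add: \<delta>_def)
  have M\<delta>: "M * \<delta> \<le> e"
    using e M0 by (simp add: \<delta>_def field_simps)
  have "wass1 n Q (empirical n N uh) < ennreal (eps + \<delta>)"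
    using Q \<delta>0 eps unfolding Dball_def by (auto intro: order.strict_trans1 ennreal_lessI)
  then obtain W where W: "coupling n Q (empirical n N uh) W"
    and cost: "(\<integral>\<^sup>+x. ennreal (\<Sum>i=1..n. \<bar>fst x i - snd x i\<bar>) \<partial>W) < ennreal (eps + \<delta>)"
    unfolding wass1_def by (auto simp: INF_less_iff)
  interpret empirical_coupling n c d C N uL uU uh s Q W
    using W Q unfolding Dball_def by unfold_locales auto
  define T where "T = integral\<^sup>L W l1_cost"
  have T: "T < eps + \<delta>" "0 \<le> T"
    unfolding T_def by (rule integral_l1_cost_less[OF cost], rule integral_l1_cost_nonneg)
  define \<theta> where "\<theta> = (if T \<le> eps then 1 else eps / T)"
  have \<theta>: "0 \<le> \<theta>" "\<theta> \<le> 1" "\<theta> * T \<le> eps" and slack: "(1 - \<theta>) * T \<le> \<delta>"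
    using T eps \<delta>0 unfolding \<theta>_def by (auto simp: field_simps)
  have "(\<integral>u. fval n c d C s u \<partial>Q) = (\<integral>x. fval n c d C s (fst x) \<partial>W)"
    by (rule integral_fval_fst)
  also have "\<dots> \<le> LP_val n N c d C uL uU uh s eps + M * ((1 - \<theta>) * T)"
    using integral_fval_le_LP_val_plus[OF \<theta>(1,2)] \<theta>(3) unfolding M_def T_def by simp
  also have "M * ((1 - \<theta>) * T) \<le> M * \<delta>" by (rule mult_left_mono[OF slack M0])
  finally show "(\<integral>u. fval n c d C s u \<partial>Q) \<le> LP_val n N c d C uL uU uh s eps + e" using M\<delta> by linarith
qed

section \<open>Strong duality\<close>

lemma LP_feasible_trivial:
  assumes "eps \<ge> 0"
  shows "LP_feasible n N uL uU uh eps (\<lambda>k l j. if k = 1 \<and> l = n + 1 then 1 else 0) (\<lambda>_ _ _. 0) (\<lambda>_ _ _. 0)"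
proof -
  have "Psum (\<lambda>k l j. if k = 1 \<and> l = n + 1 then 1 else 0) i l j = (if l = n + 1 then 1 else 0)"
    if "i \<in> {1..n}" for i l j
    using that by (simp add: Psum_def sum.delta)
  then show ?thesis using assms unfolding LP_feasible_def by (simp add: sum.delta')
qed

lemma has_marginals_exists_if_LP_feasible:
  assumes "n \<ge> 1" "LP_feasible n N uL uU uh eps p q r" "j \<in> {1..N}"
  shows "\<exists>P. has_marginals n p j P"
  using assms by (intro has_marginals_exists) (auto simp: LP_feasible_def)

context dro_data
begin

lemma Qstar_in_Dball_and_LP_obj_le:
  assumes "LP_feasible n N uL uU uh eps p q r" "\<forall>j\<in>{1..N}. has_marginals n p j (Pt j)"
  shows "Qstar n N uL uU uh p q r Pt \<in> Dball n uL uU N uh eps"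
    and "LP_obj n N c d C uL uU uh s p q r \<le> (\<integral>u. fval n c d C s u \<partial>Qstar n N uL uU uh p q r Pt)"
proof -
  interpret Qstar_data n c d C N uL uU uh eps p q r Pt
    using assms by unfold_locales
  show "Qstar n N uL uU uh p q r Pt \<in> Dball n uL uU N uh eps" by (rule Qstar_in_Dball)
  show "LP_obj n N c d C uL uU uh s p q r \<le> (\<integral>u. fval n c d C s u \<partial>Qstar n N uL uU uh p q r Pt)"
    by (rule LP_obj_le_integral_Qstar)
qed

lemma LP_obj_le_integral_Dball:
  assumes "LP_feasible n N uL uU uh eps p q r"
  shows "\<exists>Q\<in>Dball n uL uU N uh eps. LP_obj n N c d C uL uU uh s p q r \<le> (\<integral>u. fval n c d C s u \<partial>Q)"
proof -
  have "\<forall>j\<in>{1..N}. \<exists>P. has_marginals n p j P"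
    using has_marginals_exists_if_LP_feasible[OF n_pos assms] by blast
  then obtain Pt where "\<forall>j\<in>{1..N}. has_marginals n p j (Pt j)" by metis
  then show ?thesis using Qstar_in_Dball_and_LP_obj_le[OF assms] by blast
qed

lemma Sup_integral_fval_Dball:
  assumes eps: "eps \<ge> 0"
  shows "Sup ((\<lambda>Q. \<integral>u. fval n c d C s u \<partial>Q) ` Dball n uL uU N uh eps) = LP_val n N c d C uL uU uh s eps"
    and "bdd_above ((\<lambda>Q. \<integral>u. fval n c d C s u \<partial>Q) ` Dball n uL uU N uh eps)"
proof -
  let ?F = "(\<lambda>Q. \<integral>u. fval n c d C s u \<partial>Q) ` Dball n uL uU N uh eps"
  let ?S = "{LP_obj n N c d C uL uU uh s p q r | p q r. LP_feasible n N uL uU uh eps p q r}"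
  have upper: "x \<le> LP_val n N c d C uL uU uh s eps" if "x \<in> ?F" for x
    using that integral_fval_le_LP_val[OF eps] by blast
  then show bdd: "bdd_above ?F" by (intro bdd_aboveI) blast
  have "?S \<noteq> {}" using LP_feasible_trivial[OF eps] by blast
  then have "?F \<noteq> {}" using LP_obj_le_integral_Dball by blast
  then have "Sup ?F \<le> LP_val n N c d C uL uU uh s eps" using upper by (rule cSup_least)
  moreover have "LP_val n N c d C uL uU uh s eps \<le> Sup ?F"
    unfolding LP_val_def
  proof (rule cSup_least[OF \<open>?S \<noteq> {}\<close>])
    fix x assume "x \<in> ?S"
    then obtain Q where "Q \<in> Dball n uL uU N uh eps" "x \<le> (\<integral>u. fval n c d C s u \<partial>Q)"
      using LP_obj_le_integral_Dball by blast
    then show "x \<le> Sup ?F" using cSup_upper[OF _ bdd] by (meson image_eqI order_trans)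
  qed
  ultimately show "Sup ?F = LP_val n N c d C uL uU uh s eps" by (rule antisym)
qed

end

theorem theorem5:
  fixes n N :: nat and T C eps :: real
    and c d uL uU sbar :: "nat \<Rightarrow> real" and uh :: "nat \<Rightarrow> nat \<Rightarrow> real"
  assumes "n \<ge> 1" and "N \<ge> 1" and "T > 0"
    and "\<forall>i\<in>{1..n}. c i \<ge> 0" and "\<forall>i\<in>{1..n}. d i \<ge> 0" and "C \<ge> 0"
    and "\<forall>i\<in>{1..n-1}. d (i+1) - d i \<le> c (i+1)"
    and "\<forall>i\<in>{1..n}. 0 \<le> uL i \<and> uL i < uU i"
    and "\<forall>j\<in>{1..N}. \<forall>i\<in>{1..n}. uL i \<le> uh j i \<and> uh j i \<le> uU i"
    and "\<forall>i\<in>{1..n}. sbar i \<ge> 0" and "(\<Sum>i=1..n. sbar i) \<le> T"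
    and "eps \<ge> 0"
  shows "Sup ((\<lambda>Q. \<integral>u. fval n c d C sbar u \<partial>Q) ` Dball n uL uU N uh eps)
           = LP_val n N c d C uL uU uh sbar eps
       \<and> (\<forall>p q r. LP_feasible n N uL uU uh eps p q r \<and>
              LP_obj n N c d C uL uU uh sbar p q r = LP_val n N c d C uL uU uh sbar eps \<longrightarrow>
            (\<forall>j\<in>{1..N}. \<exists>P :: (nat \<times> nat \<Rightarrow> nat) pmf. has_marginals n p j P) \<and>
            (\<forall>Pt. (\<forall>j\<in>{1..N}. has_marginals n p j (Pt j)) \<longrightarrow>
                 Qstar n N uL uU uh p q r Pt \<in> Dball n uL uU N uh eps \<and>
                 (\<integral>u. fval n c d C sbar u \<partial>(Qstar n N uL uU uh p q r Pt))
                   = Sup ((\<lambda>Q. \<integral>u. fval n c d C sbar u \<partial>Q) ` Dball n uL uU N uh eps)))"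
proof -
  interpret dro_data n c d C N uL uU uh
    using assms by unfold_locales auto
  note sup_eq = Sup_integral_fval_Dball[OF \<open>eps \<ge> 0\<close>, of sbar]
  have optimal_Qstar:
    "Qstar n N uL uU uh p q r Pt \<in> Dball n uL uU N uh eps \<and>
     (\<integral>u. fval n c d C sbar u \<partial>Qstar n N uL uU uh p q r Pt) = LP_val n N c d C uL uU uh sbar eps"
    if "LP_feasible n N uL uU uh eps p q r" "LP_obj n N c d C uL uU uh sbar p q r = LP_val n N c d C uL uU uh sbar eps"
      "\<forall>j\<in>{1..N}. has_marginals n p j (Pt j)" for p q r Pt
    using Qstar_in_Dball_and_LP_obj_le(1)[OF that(1,3)] Qstar_in_Dball_and_LP_obj_le(2)[OF that(1,3), of sbar]
      cSup_upper[OF _ sup_eq(2)] sup_eq(1) that(2)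
    by (metis (no_types, lifting) antisym image_eqI)
  show ?thesis
    using sup_eq(1) optimal_Qstar has_marginals_exists_if_LP_feasible[OF \<open>n \<ge> 1\<close>] by auto
qed

end
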